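(* Let $\mathcal{T} = \{T_1, \ldots, T_t\}$ be a set of unrooted binary phylogenetic trees on a common leaf set $X$, let $\mathcal{Q} = \bigcup_{i=2}^t \mathcal{Q}_i$, where $\mathcal{Q}_i$ is the set of incompatible quartets of $T_1$ and $T_i$, and consider the integer program $$\text{minimize } \sum_{e \in E(T_1)} x_e \quad \text{s.t. } \sum_{e \in L(Q)} x_e \ge 1 \ \ \forall Q \in \mathcal{Q}, \qquad x_e \in \{0,1\}\ \ \forall e \in E(T_1).$$ Identify a $0/1$ vector $x$ with the edge set $\{e \in E(T_1) : x_e = 1\}$. Then a subset $E \subseteq E(T_1)$ is a feasible solution of this integer program if and only if $\mathcal{F}_E$ is an agreement forest of $\mathcal{T}$.
   Context: A (binary) phylogenetic tree on a finite set $X$ is an unrooted tree whose internal vertices have degree 3 and whose leaves are bijectively labelled by $X$ (leaves are identified with their labels). Two phylogenetic trees on $X$ are isomorphic ($\cong$) if there is a graph isomorphism between them fixing every leaf label. For $Y \subseteq X$, $T[Y]$ is the minimal subtree of $T$ connecting the leaves in $Y$, and $T|_Y$ is obtained from $T[Y]$ by suppressing all degree-2 vertices (replacing a degree-2 vertex $v$ with neighbours $u,w$ by an edge $\{u,w\}$). An agreement forest of $\mathcal{T}=\{T_1,\dots,T_t\}$ is a partition $\{Y_1,\ldots,Y_k\}$ of $X$ such that (1) $T_i|_{Y_h} \cong T_j|_{Y_h}$ for all $i,j,h$, and (2) for every $i$ and all $h \ne h'$, the subtrees $T_i[Y_h]$ and $T_i[Y_{h'}]$ are vertex-disjoint. A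 quartet is a 4-element subset of $X$. For a quartet $Q=\{a,b,c,d\}$, $ab|cd$ denotes the tree on $Q$ in which $a,b$ share a neighbour $u$, $c,d$ share a neighbour $v$, and $u,v$ are adjacent. If $T_1|_Q \cong ab|cd$, then $L(Q)$ is the set of edges of $T_1[\{a,b\}] \cup T_1[\{c,d\}]$. A quartet $Q$ is an incompatible quartet of $T_i$ and $T_j$ if $T_i|_Q \not\cong T_j|_Q$. For $E \subseteq E(T_1)$, $\mathcal{F}_E$ is the partition of $X$ in which leaves $a,b$ lie in the same part iff the path $T_1[\{a,b\}]$ contains no edge of $E$. *)

theory Defs
  imports Main
begin

type_synonym 'v graph = "'v set \<times> 'v set set"

definition verts :: "'v graph \<Rightarrow> 'v set" where "verts G = fst G"
definition edges :: "'v graph \<Rightarrow> 'v set set" where "edges G = snd G"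

definition wf_graph :: "'v graph \<Rightarrow> bool" where
  "wf_graph G \<longleftrightarrow> finite (verts G) \<and>
     (\<forall>e\<in>edges G. \<exists>u v. u \<noteq> v \<and> u \<in> verts G \<and> v \<in> verts G \<and> e = {u, v})"

definition degree :: "'v graph \<Rightarrow> 'v \<Rightarrow> nat" where
  "degree G v = card {e \<in> edges G. v \<in> e}"

definition is_walk :: "'v graph \<Rightarrow> 'v list \<Rightarrow> bool" where
  "is_walk G p \<longleftrightarrow> p \<noteq> [] \<and> set p \<subseteq> verts G \<and>
     (\<forall>i. Suc i < length p \<longrightarrow> {p ! i, p ! Suc i} \<in> edges G)"

definition is_path :: "'v graph \<Rightarrow> 'v \<Rightarrow> 'v \<Rightarrow> 'v list \<Rightarrow> bool" where
  "is_path G u w p \<longleftrightarrow> is_walk G p \<and> distinct p \<and> hd p = u \<and> last p = w"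

definition list_edges :: "'v list \<Rightarrow> 'v set set" where
  "list_edges p = {{p ! i, p ! Suc i} | i. Suc i < length p}"

definition connected_graph :: "'v graph \<Rightarrow> bool" where
  "connected_graph G \<longleftrightarrow> (\<forall>u\<in>verts G. \<forall>w\<in>verts G. \<exists>p. is_path G u w p)"

definition acyclic_graph :: "'v graph \<Rightarrow> bool" where
  "acyclic_graph G \<longleftrightarrow> \<not> (\<exists>p. is_walk G p \<and> distinct p \<and> length p \<ge> 3 \<and>
                                {last p, hd p} \<in> edges G)"

definition is_tree :: "'v graph \<Rightarrow> bool" where
  "is_tree G \<longleftrightarrow> wf_graph G \<and> connected_graph G \<and> acyclic_graph G"

section \<open>Binary phylogenetic trees (leaves identified with their labels)\<close>

definition phylo_tree :: "'v set \<Rightarrow> 'v graph \<Rightarrow> bool" where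
  "phylo_tree X T \<longleftrightarrow> is_tree T \<and> X \<subseteq> verts T \<and>
     (\<forall>x\<in>X. degree T x \<le> 1) \<and> (\<forall>v\<in>verts T - X. degree T v = 3)"

definition iso_fixing :: "'v set \<Rightarrow> 'v graph \<Rightarrow> 'v graph \<Rightarrow> bool" where
  "iso_fixing Y G H \<longleftrightarrow> (\<exists>f. bij_betw f (verts G) (verts H) \<and> (\<forall>y\<in>Y. f y = y) \<and>
     (\<forall>u\<in>verts G. \<forall>v\<in>verts G. {u, v} \<in> edges G \<longleftrightarrow> {f u, f v} \<in> edges H))"

text \<open>T[Y]: the minimal subtree of T connecting Y (union of the paths between
  elements of Y).\<close>
definition span :: "'v graph \<Rightarrow> 'v set \<Rightarrow> 'v graph" where
  "span T Y = (\<Union>{set p | p a b. a \<in> Y \<and> b \<in> Y \<and> is_path T a b p},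
               \<Union>{list_edges p | p a b. a \<in> Y \<and> b \<in> Y \<and> is_path T a b p})"

text \<open>T|Y: T[Y] with all degree-2 vertices suppressed.\<close>
definition restr :: "'v graph \<Rightarrow> 'v set \<Rightarrow> 'v graph" where
  "restr T Y = (let S = span T Y;
                    K = {v \<in> verts S. degree S v \<noteq> 2}
     in (K, {{u, w} | u w. u \<in> K \<and> w \<in> K \<and> u \<noteq> w \<and>
              (\<exists>p. is_path S u w p \<and>
                   (\<forall>i. 0 < i \<and> Suc i < length p \<longrightarrow> degree S (p ! i) = 2))}))"

definition is_partition :: "'v set set \<Rightarrow> 'v set \<Rightarrow> bool" where
  "is_partition P X \<longleftrightarrow> (\<forall>Y\<in>P. Y \<noteq> {}) \<and> \<Union>P = X \<and>
     (\<forall>Y\<in>P. \<forall>Z\<in>P. Y \<noteq> Z \<longrightarrow> Y \<inter> Z = {})"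

definition agreement_forest :: "'v set \<Rightarrow> (nat \<Rightarrow> 'v graph) \<Rightarrow> nat \<Rightarrow> 'v set set \<Rightarrow> bool" where
  "agreement_forest X T t P \<longleftrightarrow> is_partition P X \<and>
     (\<forall>i\<in>{1..t}. \<forall>j\<in>{1..t}. \<forall>Y\<in>P. iso_fixing Y (restr (T i) Y) (restr (T j) Y)) \<and>
     (\<forall>i\<in>{1..t}. \<forall>Y\<in>P. \<forall>Z\<in>P. Y \<noteq> Z \<longrightarrow> verts (span (T i) Y) \<inter> verts (span (T i) Z) = {})"

definition is_quartet :: "'v set \<Rightarrow> 'v set \<Rightarrow> bool" where
  "is_quartet X Q \<longleftrightarrow> Q \<subseteq> X \<and> card Q = 4"

definition is_split :: "'v graph \<Rightarrow> 'v \<Rightarrow> 'v \<Rightarrow> 'v \<Rightarrow> 'v \<Rightarrow> bool" where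
  "is_split G a b c d \<longleftrightarrow> (\<exists>u v. distinct [a, b, c, d, u, v] \<and>
     iso_fixing {a, b, c, d} G
       ({a, b, c, d, u, v}, {{a, u}, {b, u}, {c, v}, {d, v}, {u, v}}))"

definition incompatible_quartets :: "'v set \<Rightarrow> 'v graph \<Rightarrow> 'v graph \<Rightarrow> 'v set set" where
  "incompatible_quartets X Ti Tj =
     {Q. is_quartet X Q \<and> \<not> iso_fixing Q (restr Ti Q) (restr Tj Q)}"

definition all_incompatible :: "'v set \<Rightarrow> (nat \<Rightarrow> 'v graph) \<Rightarrow> nat \<Rightarrow> 'v set set" where
  "all_incompatible X T t = (\<Union>i\<in>{2..t}. incompatible_quartets X (T 1) (T i))"

text \<open>L(Q) for T1|Q = ab|cd.\<close>
definition L_edges :: "'v graph \<Rightarrow> 'v \<Rightarrow> 'v \<Rightarrow> 'v \<Rightarrow> 'v \<Rightarrow> 'v set set" where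
  "L_edges T1 a b c d = edges (span T1 {a, b}) \<union> edges (span T1 {c, d})"

definition ip_feasible :: "'v set \<Rightarrow> (nat \<Rightarrow> 'v graph) \<Rightarrow> nat \<Rightarrow> ('v set \<Rightarrow> int) \<Rightarrow> bool" where
  "ip_feasible X T t x \<longleftrightarrow> (\<forall>e\<in>edges (T 1). x e \<in> {0, 1}) \<and>
     (\<forall>Q\<in>all_incompatible X T t. \<forall>a b c d.
        Q = {a, b, c, d} \<and> is_split (restr (T 1) Q) a b c d \<longrightarrow>
        (\<Sum>e\<in>L_edges (T 1) a b c d. x e) \<ge> 1)"

definition forest_of :: "'v set \<Rightarrow> 'v graph \<Rightarrow> 'v set set \<Rightarrow> 'v set set" where
  "forest_of X T1 E = {{b \<in> X. edges (span T1 {a, b}) \<inter> E = {}} | a. a \<in> X}"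

end

theory Submission
  imports Defs
begin

(*
  Everything is reduced to quartets.  For Y \<subseteq> X, the restrictions T|Y and T'|Y are isomorphic
  (fixing Y) iff for all a, b, c, d in Y the T-paths a-b and c-d are disjoint exactly when the
  T'-paths are.  Necessity: a vertex of T|Y lies on the tree path a-b iff it separates a from b
  in T|Y, and isomorphisms fixing Y preserve separation.  Sufficiency: a vertex of T|Y is
  determined by the set of pairs of Y whose path passes through it, and quartet agreement matches
  these sets between the two trees.

  F_E is the quotient of X by the relation "the T_1-path avoids E", and E is feasible iff no
  incompatible quartet with split ab|cd in T_1 has a ~ b and c ~ d.  Given feasibility, any split
  of T_1 whose two sides are kept together by F_E is displayed by every T_i: inside a part this
  gives agreement of all quartets, hence of the restrictions; across two parts it shows that
  their spans are vertex-disjoint.  Conversely, an incompatible quartet ab|cd with a ~ b and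
  c ~ d lies either inside one part, contradicting agreement, or across two parts, whose
  disjoint spans in T_i force T_i to display ab|cd as well.
*)

lemma is_walk_single[simp]: "is_walk G [x] \<longleftrightarrow> x \<in> verts G"
  by (auto simp: is_walk_def)

lemma is_walk_Cons2: "is_walk G (x # y # p) \<longleftrightarrow> x \<in> verts G \<and> {x,y} \<in> edges G \<and> is_walk G (y # p)"
proof -
  have "(\<forall>i. Suc i < length (x#y#p) \<longrightarrow> {(x#y#p) ! i, (x#y#p) ! Suc i} \<in> edges G)
     \<longleftrightarrow> {x,y} \<in> edges G \<and> (\<forall>i. Suc i < length (y#p) \<longrightarrow> {(y#p) ! i, (y#p) ! Suc i} \<in> edges G)"
    (is "?A \<longleftrightarrow> ?B")
  proof
    assume ?A
    then show ?B by (metis Suc_less_eq length_Cons nth_Cons_0 nth_Cons_Suc zero_less_Suc)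
  next
    assume ?B
    show ?A
    proof (intro allI impI)
      fix i assume "Suc i < length (x#y#p)"
      then show "{(x#y#p) ! i, (x#y#p) ! Suc i} \<in> edges G"
        using \<open>?B\<close> by (cases i) auto
    qed
  qed
  then show ?thesis unfolding is_walk_def by auto
qed

lemma list_edges_Nil[simp]: "list_edges [] = {}" by (auto simp: list_edges_def)
lemma list_edges_single[simp]: "list_edges [x] = {}" by (auto simp: list_edges_def)
lemma list_edges_Cons2: "list_edges (x # y # p) = insert {x,y} (list_edges (y # p))"
proof -
  have "list_edges (x # y # p) = {{(x#y#p) ! i, (x#y#p) ! Suc i} | i. Suc i < length (x#y#p)}"
    by (simp add: list_edges_def)
  also have "\<dots> = insert {x,y} {{(y#p) ! i, (y#p) ! Suc i} | i. Suc i < length (y#p)}"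
  proof (rule set_eqI, rule iffI)
    fix e assume "e \<in> {{(x#y#p) ! i, (x#y#p) ! Suc i} | i. Suc i < length (x#y#p)}"
    then obtain i where "e = {(x#y#p) ! i, (x#y#p) ! Suc i}" "Suc i < length (x#y#p)" by auto
    then show "e \<in> insert {x,y} {{(y#p) ! i, (y#p) ! Suc i} | i. Suc i < length (y#p)}"
      by (cases i) auto
  next
    fix e assume "e \<in> insert {x,y} {{(y#p) ! i, (y#p) ! Suc i} | i. Suc i < length (y#p)}"
    then show "e \<in> {{(x#y#p) ! i, (x#y#p) ! Suc i} | i. Suc i < length (x#y#p)}"
    proof
      assume "e = {x,y}" then show ?thesis by force
    next
      assume "e \<in> {{(y#p) ! i, (y#p) ! Suc i} | i. Suc i < length (y#p)}"
      then obtain i where "e = {(y#p) ! i, (y#p) ! Suc i}" "Suc i < length (y#p)" by auto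
      then show ?thesis by (auto intro!: exI[of _ "Suc i"])
    qed
  qed
  finally show ?thesis by (simp add: list_edges_def)
qed

lemma is_walk_Nil[simp]: "\<not> is_walk G []" by (simp add: is_walk_def)

lemma is_walk_ConsD: "is_walk G (x # p) \<Longrightarrow> p \<noteq> [] \<Longrightarrow> is_walk G p"
  by (cases p) (auto simp: is_walk_Cons2)

lemma is_walk_append:
  "p \<noteq> [] \<Longrightarrow> q \<noteq> [] \<Longrightarrow> is_walk G (p @ q) \<longleftrightarrow> is_walk G p \<and> is_walk G q \<and> {last p, hd q} \<in> edges G"
proof (induction p rule: induct_list012)
  case 1 then show ?case by simp
next
  case (2 x) then show ?case by (cases q) (auto simp: is_walk_Cons2)
next
  case (3 x y zs) then show ?case by (simp add: is_walk_Cons2)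
qed

lemma list_edges_append:
  "p \<noteq> [] \<Longrightarrow> q \<noteq> [] \<Longrightarrow> list_edges (p @ q) = list_edges p \<union> list_edges q \<union> {{last p, hd q}}"
proof (induction p rule: induct_list012)
  case 1 then show ?case by simp
next
  case (2 x) then show ?case by (cases q) (auto simp: list_edges_Cons2)
next
  case (3 x y zs) then show ?case by (auto simp: list_edges_Cons2)
qed

lemma is_walk_rev: "is_walk G p \<Longrightarrow> is_walk G (rev p)"
proof (induction p)
  case (Cons x p)
  show ?case
  proof (cases "p = []")
    case True then show ?thesis using Cons by simp
  next
    case False
    then have "is_walk G p" using Cons.prems is_walk_ConsD by metis
    then have w: "is_walk G (rev p)" using Cons.IH by simp
    obtain y q where pq: "p = y # q" using False by (cases p) auto
    have e: "{x, hd p} \<in> edges G" "x \<in> verts G" using Cons.prems pq by (auto simp: is_walk_Cons2)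
    have "{last (rev p), hd [x]} = {x, hd p}" using False by (auto simp: last_rev)
    then have "is_walk G (rev p @ [x])" using w e False by (subst is_walk_append) auto
    then show ?thesis by simp
  qed
qed simp

lemma list_edges_rev: "list_edges (rev p) = list_edges p"
proof (induction p)
  case (Cons x p)
  show ?case
  proof (cases "p = []")
    case True then show ?thesis by simp
  next
    case False
    obtain y q where pq: "p = y # q" using False by (cases p) auto
    have "list_edges (rev p @ [x]) = list_edges (rev p) \<union> {{last (rev p), hd [x]}}"
      using False by (subst list_edges_append) auto
    also have "\<dots> = list_edges (x # p)" using pq Cons.IH False by (auto simp: list_edges_Cons2 last_rev)
    finally show ?thesis by simp
  qed
qed simp

lemma is_path_rev: "is_path G u w p \<Longrightarrow> is_path G w u (rev p)"
  by (auto simp: is_path_def is_walk_rev hd_rev last_rev)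

lemma list_edges_subset: "is_walk G p \<Longrightarrow> list_edges p \<subseteq> edges G"
  by (auto simp: is_walk_def list_edges_def)

lemma is_walk_prefix: "is_walk G (xs @ ys) \<Longrightarrow> xs \<noteq> [] \<Longrightarrow> is_walk G xs"
  by (cases "ys = []") (auto simp: is_walk_append)

lemma is_walk_suffix: "is_walk G (xs @ ys) \<Longrightarrow> ys \<noteq> [] \<Longrightarrow> is_walk G ys"
  by (cases "xs = []") (auto simp: is_walk_append)

lemma list_edges_prefix: "list_edges xs \<subseteq> list_edges (xs @ ys)"
  by (cases "xs = []"; cases "ys = []") (auto simp: list_edges_append)

lemma list_edges_suffix: "list_edges ys \<subseteq> list_edges (xs @ ys)"
  by (cases "xs = []"; cases "ys = []") (auto simp: list_edges_append)

lemma is_walk_glue: "is_walk G (xs @ [z]) \<Longrightarrow> is_walk G (z # ys) \<Longrightarrow> is_walk G (xs @ z # ys)"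
proof (cases "xs = []")
  case False
  assume a: "is_walk G (xs @ [z])" "is_walk G (z # ys)"
  then have "is_walk G xs" "{last xs, z} \<in> edges G" using False by (auto simp: is_walk_append)
  then show ?thesis using a False by (subst is_walk_append) auto
qed simp

lemma list_edges_glue: "list_edges (xs @ z # ys) = list_edges (xs @ [z]) \<union> list_edges (z # ys)"
proof (cases "xs = []")
  case False
  then show ?thesis using list_edges_append[of xs "z#ys"] list_edges_append[of xs "[z]"] by auto
qed simp

lemma walk_to_path:
  "is_walk G p \<Longrightarrow> \<exists>q. is_path G (hd p) (last p) q \<and> set q \<subseteq> set p \<and> list_edges q \<subseteq> list_edges p"
proof (induction "length p" arbitrary: p rule: less_induct)
  case less
  show ?case
  proof (cases "distinct p")
    case True then show ?thesis using less.prems by (auto simp: is_path_def)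
  next
    case False
    from not_distinct_decomp[OF False] obtain A B C z where "p = A @ [z] @ B @ [z] @ C" by blast
    then have p: "p = A @ z # B @ z # C" by simp
    have w1: "is_walk G (A @ [z])" using less.prems p is_walk_prefix[of G "A @ [z]" "B @ z # C"] by simp
    have w2: "is_walk G (z # C)" using less.prems p is_walk_suffix[of G "A @ z # B" "z # C"] by simp
    have w: "is_walk G (A @ z # C)" using is_walk_glue[OF w1 w2] .
    have e1: "list_edges (A @ [z]) \<subseteq> list_edges p"
      using p list_edges_prefix[of "A @ [z]" "B @ z # C"] by simp
    have e2: "list_edges (z # C) \<subseteq> list_edges p"
      using p list_edges_suffix[of "z # C" "A @ z # B"] by simp
    have e: "list_edges (A @ z # C) \<subseteq> list_edges p" using e1 e2 list_edges_glue[of A z C] by auto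
    have "length (A @ z # C) < length p" using p by simp
    from less.hyps[OF this w] obtain q where q: "is_path G (hd (A @ z # C)) (last (A @ z # C)) q"
      "set q \<subseteq> set (A @ z # C)" "list_edges q \<subseteq> list_edges (A @ z # C)" by blast
    have "hd (A @ z # C) = hd p" "last (A @ z # C) = last p" using p by (cases A; simp)+
    then have "is_path G (hd p) (last p) q" using q(1) by simp
    moreover have "set q \<subseteq> set p" using q(2) p by auto
    moreover have "list_edges q \<subseteq> list_edges p" using q(3) e by blast
    ultimately show ?thesis by blast
  qed
qed

lemma distinct_hd_eq_last: "distinct p \<Longrightarrow> p \<noteq> [] \<Longrightarrow> hd p = last p \<Longrightarrow> p = [hd p]"
proof (cases p)
  case (Cons a l)
  assume "distinct p" "hd p = last p"
  then show ?thesis using Cons by (cases "l = []") (auto simp: last_in_set)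
qed simp

lemma distinct_interior_iff:
  assumes "distinct p" "p \<noteq> []"
  shows "(\<forall>i. 0 < i \<and> Suc i < length p \<longrightarrow> P (p ! i)) \<longleftrightarrow> (\<forall>z\<in>set p. z \<noteq> hd p \<and> z \<noteq> last p \<longrightarrow> P z)"
proof -
  have idx: "z \<noteq> hd p \<and> z \<noteq> last p \<longleftrightarrow> 0 < i \<and> Suc i < length p" if i: "i < length p" "p ! i = z" for i z
  proof -
    have "z = hd p \<longleftrightarrow> i = 0"
      using nth_eq_iff_index_eq[OF assms(1) i(1), of 0] i assms(2) by (auto simp: hd_conv_nth)
    moreover have "z = last p \<longleftrightarrow> i = length p - 1"
      using nth_eq_iff_index_eq[OF assms(1) i(1), of "length p - 1"] i assms(2) by (auto simp: last_conv_nth)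
    ultimately show ?thesis using i(1) by linarith
  qed
  show ?thesis
  proof
    assume A: "\<forall>i. 0 < i \<and> Suc i < length p \<longrightarrow> P (p ! i)"
    show "\<forall>z\<in>set p. z \<noteq> hd p \<and> z \<noteq> last p \<longrightarrow> P z"
    proof (intro ballI impI)
      fix z assume "z \<in> set p" "z \<noteq> hd p \<and> z \<noteq> last p"
      then obtain i where "i < length p" "p ! i = z" "z \<noteq> hd p \<and> z \<noteq> last p"
        by (metis in_set_conv_nth)
      then show "P z" using A idx by blast
    qed
  next
    assume B: "\<forall>z\<in>set p. z \<noteq> hd p \<and> z \<noteq> last p \<longrightarrow> P z"
    show "\<forall>i. 0 < i \<and> Suc i < length p \<longrightarrow> P (p ! i)"
    proof (intro allI impI)
      fix i assume "0 < i \<and> Suc i < length p"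
      then show "P (p ! i)" using B idx[of i "p ! i"] by simp
    qed
  qed
qed

lemma path_concat:
  assumes p1: "is_path G u z p1" and p2: "is_path G z w p2" and i: "set p1 \<inter> set p2 = {z}"
  shows "is_path G u w (p1 @ tl p2)"
proof -
  obtain q where q: "p2 = z # q" using p2 by (cases p2) (auto simp: is_path_def)
  obtain A where A: "p1 = A @ [z]"
    using p1 unfolding is_path_def by (metis append_butlast_last_id is_walk_Nil)
  show ?thesis
  proof (cases "q = []")
    case True
    then show ?thesis using p1 p2 q by (auto simp: is_path_def)
  next
    case False
    have w: "is_walk G (A @ z # q)" using is_walk_glue[of G A z q] p1 p2 A q by (simp add: is_path_def)
    have "distinct (A @ z # q)" using p1 p2 A q i by (auto simp: is_path_def)
    moreover have "hd (A @ z # q) = u" using p1 A by (cases A) (auto simp: is_path_def)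
    moreover have "last (A @ z # q) = w" using p2 q False by (auto simp: is_path_def)
    ultimately show ?thesis using w A q by (simp add: is_path_def)
  qed
qed

lemma degree_ge_2_on_cycle:
  assumes fin: "finite (edges G)" and w: "is_walk G c" and d: "distinct c" and L: "length c \<ge> 3"
    and cl: "{last c, hd c} \<in> edges G" and x: "x \<in> set c"
  shows "degree G x \<ge> 2"
proof -
  let ?L = "length c"
  obtain i where i: "i < ?L" "c ! i = x" using x by (metis in_set_conv_nth)
  define j1 where "j1 = (if i = 0 then ?L - 1 else i - 1)"
  define j2 where "j2 = (if i = ?L - 1 then 0 else i + 1)"
  have j1L: "j1 < ?L" and j2L: "j2 < ?L" using i L unfolding j1_def j2_def by auto
  have jne: "j1 \<noteq> j2" using i L unfolding j1_def j2_def by auto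
  have cne: "c \<noteq> []" using L by auto
  have hd: "hd c = c ! 0" and lst: "last c = c ! (?L - 1)" using cne by (auto simp: hd_conv_nth last_conv_nth)
  have we: "\<And>k. Suc k < ?L \<Longrightarrow> {c ! k, c ! Suc k} \<in> edges G"
    using w by (simp add: is_walk_def)
  have e1: "{c ! j1, x} \<in> edges G"
  proof (cases "i = 0")
    case True
    then show ?thesis using cl hd lst i unfolding j1_def by simp
  next
    case False
    then have "Suc (i - 1) < ?L" "Suc (i - 1) = i" using i by auto
    then show ?thesis using we[of "i - 1"] i False unfolding j1_def by simp
  qed
  have e2: "{x, c ! j2} \<in> edges G"
  proof (cases "i = ?L - 1")
    case True
    then show ?thesis using cl hd lst i unfolding j2_def by (simp add: insert_commute)
  next
    case False
    then have "Suc i < ?L" using i by auto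
    then show ?thesis using we[of i] i False unfolding j2_def by simp
  qed
  have "c ! j1 \<noteq> c ! j2" using nth_eq_iff_index_eq[OF d j1L j2L] jne by simp
  then have "{c ! j1, x} \<noteq> {x, c ! j2}" by (auto simp: doubleton_eq_iff)
  then have "card {{c ! j1, x}, {x, c ! j2}} = 2" by simp
  moreover have "{{c ! j1, x}, {x, c ! j2}} \<subseteq> {e \<in> edges G. x \<in> e}" using e1 e2 by auto
  moreover have "finite {e \<in> edges G. x \<in> e}" using fin by simp
  ultimately show ?thesis unfolding degree_def by (metis card_mono)
qed

lemma connected_if_walks_to_hub:
  assumes h: "\<forall>x\<in>verts G. \<exists>p. is_walk G p \<and> hd p = x \<and> last p = hub"
  shows "connected_graph G"
  unfolding connected_graph_def
proof (intro ballI)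
  fix x y assume x: "x \<in> verts G" and y: "y \<in> verts G"
  obtain p where p: "is_walk G p" "hd p = x" "last p = hub" using h x by blast
  obtain q where q: "is_walk G q" "hd q = y" "last q = hub" using h y by blast
  obtain A where A: "p = A @ [hub]" using p by (metis append_butlast_last_id is_walk_Nil)
  obtain B where B: "rev q = hub # B" using q
    by (metis append_butlast_last_id is_walk_Nil rev.simps(2) rev_rev_ident rev_is_Nil_conv)
  have "is_walk G (A @ hub # B)" using is_walk_glue[of G A hub B] p(1) is_walk_rev[OF q(1)] A B by simp
  moreover have "hd (A @ hub # B) = x" using p A by (cases A) auto
  moreover have "last (A @ hub # B) = y"
  proof -
    have "last (hub # B) = last (rev q)" using B by simp
    also have "\<dots> = hd q" using q(1) by (simp add: last_rev)
    finally show ?thesis using q(2) by (cases B) auto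
  qed
  ultimately show "\<exists>p. is_path G x y p" using walk_to_path by metis
qed

lemma card_ge_3_obtain:
  assumes "card S \<ge> 3"
  obtains x y z where "x \<in> S" "y \<in> S" "z \<in> S" "x \<noteq> y" "y \<noteq> z" "x \<noteq> z"
proof -
  obtain R where "R \<subseteq> S" "card R = 3" using obtain_subset_with_card_n[OF assms] by blast
  then show ?thesis using that unfolding card_3_iff by blast
qed

lemma card_incident_eq_card_neighbours:
  assumes "\<forall>e\<in>F. \<exists>x y. e = {x, y}" "finite F"
  shows "card {e \<in> F. v \<in> e} = card {n. {v, n} \<in> F}"
proof -
  have "bij_betw (\<lambda>n. {v, n}) {n. {v, n} \<in> F} {e \<in> F. v \<in> e}"
  proof (rule bij_betwI')
    show "\<And>x y. x \<in> {n. {v, n} \<in> F} \<Longrightarrow> y \<in> {n. {v, n} \<in> F} \<Longrightarrow> ({v, x} = {v, y}) = (x = y)"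
      by (auto simp: doubleton_eq_iff)
    show "\<And>x. x \<in> {n. {v, n} \<in> F} \<Longrightarrow> {v, x} \<in> {e \<in> F. v \<in> e}" by simp
    fix e assume e: "e \<in> {e \<in> F. v \<in> e}"
    then obtain x y where xy: "e = {x, y}" using assms(1) by blast
    then have "e = {v, if v = x then y else x}" using e by auto
    then show "\<exists>n\<in>{n. {v, n} \<in> F}. e = {v, n}"
      using e by (intro bexI[of _ "if v = x then y else x"]) auto
  qed
  then show ?thesis by (simp add: bij_betw_same_card)
qed

lemma list_edges_in_set: "{x, y} \<in> list_edges p \<Longrightarrow> x \<in> set p \<and> y \<in> set p"
proof -
  assume "{x, y} \<in> list_edges p"
  then obtain i where i: "{x, y} = {p ! i, p ! Suc i}" "Suc i < length p" unfolding list_edges_def by blast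
  then have "p ! i \<in> set p" "p ! Suc i \<in> set p" by auto
  moreover have "x \<in> {p ! i, p ! Suc i}" "y \<in> {p ! i, p ! Suc i}" using i(1) by blast+
  ultimately show ?thesis by blast
qed

lemma card_4_distinct:
  assumes "card {a, b, c, d} = 4" shows "distinct [a, b, c, d]"
proof (rule ccontr)
  assume "\<not> distinct [a, b, c, d]"
  then have "card {a, b, c, d} \<le> 3" by (auto simp: card_insert_if insert_absorb)
  then show False using assms by simp
qed

lemma sum_indicator_ge_1_iff:
  assumes "finite L"
  shows "1 \<le> (\<Sum>e\<in>L. if e \<in> E then 1 else 0 :: int) \<longleftrightarrow> L \<inter> E \<noteq> {}"
proof -
  have "(\<Sum>e\<in>L. if e \<in> E then 1 else 0 :: int) = int (card (L \<inter> E))"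
    using assms by (simp add: sum.If_cases Int_def)
  then show ?thesis using assms by (simp add: card_gt_0_iff Suc_le_eq)
qed

lemma is_partition_quotient: "equiv A r \<Longrightarrow> is_partition (A // r) A"
  unfolding is_partition_def
  using in_quotient_imp_non_empty Union_quotient quotient_disj by metis

definition graph_iso :: "('v \<Rightarrow> 'w) \<Rightarrow> 'v graph \<Rightarrow> 'w graph \<Rightarrow> bool" where
  "graph_iso f G H \<longleftrightarrow> bij_betw f (verts G) (verts H) \<and>
     (\<forall>u\<in>verts G. \<forall>v\<in>verts G. {u, v} \<in> edges G \<longleftrightarrow> {f u, f v} \<in> edges H)"

definition separates :: "'v graph \<Rightarrow> 'v \<Rightarrow> 'v \<Rightarrow> 'v \<Rightarrow> bool" where
  "separates G v a b \<longleftrightarrow> (\<forall>p. is_path G a b p \<longrightarrow> v \<in> set p)"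

lemma iso_fixing_iff: "iso_fixing Y G H \<longleftrightarrow> (\<exists>f. graph_iso f G H \<and> (\<forall>y\<in>Y. f y = y))"
  unfolding iso_fixing_def graph_iso_def by blast

lemma graph_iso_inv:
  assumes f: "graph_iso f G H"
  shows "graph_iso (inv_into (verts G) f) H G"
proof -
  let ?g = "inv_into (verts G) f"
  have bij: "bij_betw f (verts G) (verts H)" using f unfolding graph_iso_def by blast
  have g: "bij_betw ?g (verts H) (verts G)" by (rule bij_betw_inv_into[OF bij])
  have "{u, v} \<in> edges H \<longleftrightarrow> {?g u, ?g v} \<in> edges G" if "u \<in> verts H" "v \<in> verts H" for u v
  proof -
    have "{?g u, ?g v} \<in> edges G \<longleftrightarrow> {f (?g u), f (?g v)} \<in> edges H"
      using f bij_betw_apply[OF g] that unfolding graph_iso_def by blast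
    then show ?thesis using bij_betw_inv_into_right[OF bij] that by simp
  qed
  then show ?thesis unfolding graph_iso_def using g by blast
qed

lemma inv_into_fixed:
  "graph_iso f G H \<Longrightarrow> y \<in> verts G \<Longrightarrow> f y = y \<Longrightarrow> inv_into (verts G) f y = y"
  using inv_into_f_f[of f "verts G" y] unfolding graph_iso_def bij_betw_def by simp

lemma iso_fixing_sym:
  assumes "iso_fixing Y G H" "Y \<subseteq> verts G"
  shows "iso_fixing Y H G"
proof -
  obtain f where f: "graph_iso f G H" "\<forall>y\<in>Y. f y = y"
    using assms(1) unfolding iso_fixing_iff by blast
  then have "\<forall>y\<in>Y. inv_into (verts G) f y = y" using inv_into_fixed[OF f(1)] assms(2) by auto
  then show ?thesis using graph_iso_inv[OF f(1)] unfolding iso_fixing_iff by blast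
qed

lemma graph_iso_path:
  assumes f: "graph_iso f G H" and p: "is_path G a b p"
  shows "is_path H (f a) (f b) (map f p)"
proof -
  have bij: "bij_betw f (verts G) (verts H)" using f unfolding graph_iso_def by blast
  have sp: "set p \<subseteq> verts G" and ne: "p \<noteq> []" using p by (auto simp: is_path_def is_walk_def)
  have "is_walk H (map f p)"
    unfolding is_walk_def
  proof (intro conjI allI impI)
    show "map f p \<noteq> []" using ne by simp
    show "set (map f p) \<subseteq> verts H" using sp bij_betw_apply[OF bij] by auto
    fix i assume i: "Suc i < length (map f p)"
    have "{p ! i, p ! Suc i} \<in> edges G" using p i by (simp add: is_path_def is_walk_def)
    moreover have "p ! i \<in> verts G" "p ! Suc i \<in> verts G" using sp i by auto
    ultimately show "{map f p ! i, map f p ! Suc i} \<in> edges H" using f i unfolding graph_iso_def by auto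
  qed
  moreover have "distinct (map f p)"
    using p inj_on_subset[OF bij_betw_imp_inj_on[OF bij] sp] by (simp add: is_path_def distinct_map)
  moreover have "hd (map f p) = f a" "last (map f p) = f b"
    using p ne by (auto simp: is_path_def hd_map last_map)
  ultimately show ?thesis by (simp add: is_path_def)
qed

lemma graph_iso_separates:
  assumes f: "graph_iso f G H" and a: "a \<in> verts G" "f a = a" and b: "b \<in> verts G" "f b = b"
    and sep: "separates G v a b"
  shows "separates H (f v) a b"
  unfolding separates_def
proof (intro allI impI)
  let ?g = "inv_into (verts G) f"
  have bij: "bij_betw f (verts G) (verts H)" using f unfolding graph_iso_def by blast
  fix p assume p: "is_path H a b p"
  have "is_path G a b (map ?g p)"
    using graph_iso_path[OF graph_iso_inv[OF f] p] inv_into_fixed[OF f] a b by simp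
  then have "v \<in> set (map ?g p)" using sep unfolding separates_def by blast
  then obtain x where x: "x \<in> set p" "v = ?g x" by auto
  have "x \<in> verts H" using x(1) p by (auto simp: is_path_def is_walk_def)
  then show "f v \<in> set p" using x bij_betw_inv_into_right[OF bij] by simp
qed

section \<open>Paths in trees\<close>

locale tree =
  fixes T :: "'v graph"
  assumes tree: "is_tree T"
begin

lemma tree_wf: "wf_graph T" using tree by (simp add: is_tree_def)
lemma tree_acyclic: "acyclic_graph T" using tree by (simp add: is_tree_def)
lemma tree_connected: "connected_graph T" using tree by (simp add: is_tree_def)

text \<open>Two paths from \<open>u\<close> to \<open>w\<close> that leave \<open>u\<close> through different edges close up, at their
  first common vertex after \<open>u\<close>, to a cycle.\<close>
lemma diverging_paths_absurd:
  assumes p: "is_path T u w (u # p)" and q: "is_path T u w (u # q)"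
    and ne: "p \<noteq> []" "q \<noteq> []" and diverge: "hd p \<noteq> hd q"
  shows False
proof -
  have "last p = last q" using p q ne by (simp add: is_path_def)
  then have "\<exists>x\<in>set p. x \<in> set q" using ne by (metis last_in_set)
  then obtain A z B where pA: "p = A @ z # B" and zq: "z \<in> set q" and Aq: "\<forall>y\<in>set A. y \<notin> set q"
    using split_list_first_prop[of p "\<lambda>x. x \<in> set q"] by blast
  obtain C D where qC: "q = C @ z # D" using zq split_list by metis
  define c where "c = (u # A) @ rev (C @ [z])"
  have wp: "is_walk T (u # p)" "is_walk T (u # q)" using p q by (auto simp: is_path_def)
  have dc: "distinct c" using p q pA qC Aq by (auto simp: c_def is_path_def)
  have w1: "is_walk T (u # A @ [z])" using wp(1) pA is_walk_prefix[of T "u # A @ [z]" B] by simp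
  have w2: "is_walk T (C @ [z])"
    using wp(2) qC is_walk_prefix[of T "u # C @ [z]" D] is_walk_suffix[of T "[u]" "C @ [z]"] by simp
  have wc: "is_walk T c" unfolding c_def
    using w1 is_walk_rev[OF w2] is_walk_prefix[of T "u # A" "[z]"] is_walk_append[of "u # A" "[z]" T]
    by (subst is_walk_append) auto
  have "A \<noteq> [] \<or> C \<noteq> []" using diverge pA qC by auto
  then have len: "length c \<ge> 3" by (auto simp: c_def Suc_le_eq)
  have "{u, hd q} \<in> edges T" using wp(2) ne(2) by (cases q) (auto simp: is_walk_Cons2)
  moreover have "last c = hd q" using qC by (cases C) (auto simp: c_def)
  ultimately have "{last c, hd c} \<in> edges T" by (simp add: c_def insert_commute)
  then show False using tree_acyclic wc dc len by (auto simp: acyclic_graph_def)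
qed

lemma path_unique: "is_path T u w p \<Longrightarrow> is_path T u w q \<Longrightarrow> p = q"
proof (induction "length p" arbitrary: u p q rule: less_induct)
  case less
  obtain p' where pp: "p = u # p'" using less.prems(1) by (cases p) (auto simp: is_path_def)
  obtain q' where qq: "q = u # q'" using less.prems(2) by (cases q) (auto simp: is_path_def)
  show ?case
  proof (cases "p' = [] \<or> q' = []")
    case True
    then have "u = w" using less.prems pp qq by (auto simp: is_path_def)
    then show ?thesis using less.prems pp qq distinct_hd_eq_last[of p] distinct_hd_eq_last[of q]
      by (auto simp: is_path_def)
  next
    case False
    then have np: "p' \<noteq> []" and nq: "q' \<noteq> []" by auto
    have "hd p' = hd q'" using diverging_paths_absurd less.prems pp qq np nq by blast
    moreover have "is_walk T p'" "is_walk T q'"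
      using less.prems pp qq np nq is_walk_ConsD[of T u p'] is_walk_ConsD[of T u q']
        by (auto simp: is_path_def)
    ultimately have "is_path T (hd p') w p'" "is_path T (hd p') w q'" using less.prems pp qq np nq
      by (auto simp: is_path_def)
    then have "p' = q'" using less.hyps[of p' "hd p'" q'] pp by simp
    then show ?thesis using pp qq by simp
  qed
qed

definition tpath :: "'v \<Rightarrow> 'v \<Rightarrow> 'v list" where
  "tpath u w = (THE p. is_path T u w p)"

lemma tpath_is_path: "u \<in> verts T \<Longrightarrow> w \<in> verts T \<Longrightarrow> is_path T u w (tpath u w)"
proof -
  assume "u \<in> verts T" "w \<in> verts T"
  then obtain p where p: "is_path T u w p" using tree_connected by (auto simp: connected_graph_def)
  have "\<exists>!p. is_path T u w p" using p path_unique by blast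
  then show ?thesis unfolding tpath_def by (rule theI')
qed

lemma tpath_eqI: assumes h: "is_path T u w p" shows "tpath u w = p"
  unfolding tpath_def
    by (rule the_equality[where P="\<lambda>p. is_path T u w p", OF h]) (rule path_unique[OF _ h])

lemma tpath_props:
  assumes "u \<in> verts T" "w \<in> verts T"
  shows "tpath u w \<noteq> []" "hd (tpath u w) = u" "last (tpath u w) = w" "distinct (tpath u w)"
    "is_walk T (tpath u w)" "set (tpath u w) \<subseteq> verts T" "u \<in> set (tpath u w)" "w \<in> set (tpath u w)"
proof -
  have p: "is_path T u w (tpath u w)" using tpath_is_path[OF assms] .
  show "tpath u w \<noteq> []" "hd (tpath u w) = u" "last (tpath u w) = w" "distinct (tpath u w)" "is_walk T (tpath u w)"
    using p by (auto simp: is_path_def)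
  show "set (tpath u w) \<subseteq> verts T" using p by (simp add: is_path_def is_walk_def)
  show "u \<in> set (tpath u w)" "w \<in> set (tpath u w)" using p unfolding is_path_def
    by (metis hd_in_set is_walk_Nil, metis last_in_set is_walk_Nil)
qed

lemma tpath_refl: assumes "u \<in> verts T" shows "tpath u u = [u]"
proof -
  have "is_path T u u [u]" using assms by (simp add: is_path_def)
  then show ?thesis by (rule tpath_eqI)
qed

lemma tpath_rev: assumes "u \<in> verts T" "w \<in> verts T" shows "tpath w u = rev (tpath u w)"
proof -
  have "is_path T w u (rev (tpath u w))" using is_path_rev[OF tpath_is_path[OF assms]] .
  then show ?thesis by (rule tpath_eqI)
qed

lemma set_tpath_commute: "u \<in> verts T \<Longrightarrow> w \<in> verts T \<Longrightarrow> set (tpath w u) = set (tpath u w)"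
  using tpath_rev[of u w] by simp

lemma list_edges_tpath_commute: "u \<in> verts T \<Longrightarrow> w \<in> verts T \<Longrightarrow> list_edges (tpath w u) = list_edges (tpath u w)"
  using tpath_rev[of u w] by (simp add: list_edges_rev)

lemma tpath_split:
  assumes u: "u \<in> verts T" and w: "w \<in> verts T" and x: "x \<in> set (tpath u w)"
  shows "\<exists>A B. tpath u w = A @ x # B \<and> tpath u x = A @ [x] \<and> tpath x w = x # B"
proof -
  obtain A B where AB: "tpath u w = A @ x # B" using x split_list by metis
  have p: "is_path T u w (tpath u w)" using tpath_is_path[OF u w] .
  have "is_walk T (A @ [x])" using p AB is_walk_prefix[of T "A @ [x]" B] by (simp add: is_path_def)
  moreover have "hd (A @ [x]) = u" using p AB by (cases A) (auto simp: is_path_def)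
  ultimately have "is_path T u x (A @ [x])" using p AB by (auto simp: is_path_def)
  then have 1: "tpath u x = A @ [x]" by (rule tpath_eqI)
  have "is_walk T (x # B)" using p AB is_walk_suffix[of T A "x # B"] by (simp add: is_path_def)
  moreover have "last (x # B) = w" using p AB by (auto simp: is_path_def)
  ultimately have "is_path T x w (x # B)" using p AB by (auto simp: is_path_def)
  then have 2: "tpath x w = x # B" by (rule tpath_eqI)
  show ?thesis using AB 1 2 by blast
qed

lemma tpath_split_sets:
  assumes u: "u \<in> verts T" and w: "w \<in> verts T" and x: "x \<in> set (tpath u w)"
  shows "set (tpath u w) = set (tpath u x) \<union> set (tpath x w)"
    "set (tpath u x) \<inter> set (tpath x w) = {x}"
    "list_edges (tpath u w) = list_edges (tpath u x) \<union> list_edges (tpath x w)"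
    "set (tpath u x) \<subseteq> set (tpath u w)" "set (tpath x w) \<subseteq> set (tpath u w)"
    "list_edges (tpath u x) \<subseteq> list_edges (tpath u w)" "list_edges (tpath x w) \<subseteq> list_edges (tpath u w)"
proof -
  obtain A B where AB: "tpath u w = A @ x # B" "tpath u x = A @ [x]" "tpath x w = x # B"
    using tpath_split[OF assms] by blast
  have d: "distinct (A @ x # B)" using tpath_props(4)[OF u w] AB by simp
  show "set (tpath u w) = set (tpath u x) \<union> set (tpath x w)" using AB by auto
  show "set (tpath u x) \<inter> set (tpath x w) = {x}" using AB d by auto
  show le: "list_edges (tpath u w) = list_edges (tpath u x) \<union> list_edges (tpath x w)"
    using AB list_edges_glue by metis
  show "set (tpath u x) \<subseteq> set (tpath u w)" "set (tpath x w) \<subseteq> set (tpath u w)"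
    using AB by auto
  show "list_edges (tpath u x) \<subseteq> list_edges (tpath u w)" "list_edges (tpath x w) \<subseteq> list_edges (tpath u w)"
    using le by auto
qed

lemma tpath_verts: "u \<in> verts T \<Longrightarrow> w \<in> verts T \<Longrightarrow> x \<in> set (tpath u w) \<Longrightarrow> x \<in> verts T"
  using tpath_props(6) by blast

lemma tpath_subset_walk: "is_walk T p \<Longrightarrow> set (tpath (hd p) (last p)) \<subseteq> set p \<and> list_edges (tpath (hd p) (last p)) \<subseteq> list_edges p"
  using walk_to_path[of T p] tpath_eqI by metis

lemma tpath_triangle:
  assumes u: "u \<in> verts T" and x: "x \<in> verts T" and w: "w \<in> verts T"
  shows "set (tpath u w) \<subseteq> set (tpath u x) \<union> set (tpath x w)"
    "list_edges (tpath u w) \<subseteq> list_edges (tpath u x) \<union> list_edges (tpath x w)"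
proof -
  obtain A where A: "tpath u x = A @ [x]"
    using tpath_props(1,3)[OF u x] by (metis append_butlast_last_id)
  obtain B where B: "tpath x w = x # B"
    using tpath_props(1,2)[OF x w] by (metis list.collapse)
  have wk: "is_walk T (A @ x # B)"
    using is_walk_glue[of T A x B] tpath_props(5)[OF u x] tpath_props(5)[OF x w] A B by simp
  have "hd (A @ x # B) = u" using tpath_props(2)[OF u x] A by (cases A) auto
  moreover have "last (A @ x # B) = w" using tpath_props(3)[OF x w] B by (cases B) auto
  ultimately have "set (tpath u w) \<subseteq> set (A @ x # B)" "list_edges (tpath u w) \<subseteq> list_edges (A @ x # B)"
    using tpath_subset_walk[OF wk] by auto
  then show "set (tpath u w) \<subseteq> set (tpath u x) \<union> set (tpath x w)"
    "list_edges (tpath u w) \<subseteq> list_edges (tpath u x) \<union> list_edges (tpath x w)"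
    using A B list_edges_glue[of A x B] by auto
qed

lemma between_antisym:
  assumes "a \<in> verts T" "m \<in> verts T" "x \<in> set (tpath a m)" "m \<in> set (tpath a x)"
  shows "x = m"
proof -
  have "x \<in> verts T" using assms tpath_verts by blast
  have "m \<in> set (tpath x m)" using tpath_props(8)[OF \<open>x \<in> verts T\<close> assms(2)] .
  then show ?thesis using tpath_split_sets(2)[OF assms(1,2,3)] assms(4) by auto
qed

lemma median_exists:
  assumes a: "a \<in> verts T" and b: "b \<in> verts T" and c: "c \<in> verts T"
  shows "\<exists>m. m \<in> set (tpath a b) \<and> m \<in> set (tpath b c) \<and> m \<in> set (tpath a c)"
proof -
  have "\<exists>y\<in>set (tpath b c). y \<in> set (tpath a b)"
    using tpath_props(7)[OF b c] tpath_props(8)[OF a b] by blast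
  then obtain R1 m R2 where r: "tpath b c = R1 @ m # R2" and m: "m \<in> set (tpath a b)"
    and R2: "\<forall>y\<in>set R2. y \<notin> set (tpath a b)"
    using split_list_last_prop[of "tpath b c" "\<lambda>y. y \<in> set (tpath a b)"] by blast
  have mbc: "m \<in> set (tpath b c)" using r by simp
  have mv: "m \<in> verts T" using m tpath_verts a b by blast
  show ?thesis
  proof (cases R2)
    case Nil
    then have "m = c" using tpath_props(3)[OF b c] r by simp
    then show ?thesis using m mbc tpath_props(8)[OF a c] by blast
  next
    case (Cons x R3)
    have xab: "x \<notin> set (tpath a b)" using R2 Cons by simp
    have "is_walk T (m # x # R3)"
      using tpath_props(5)[OF b c] r Cons is_walk_suffix[of T R1 "m # x # R3"] by simp
    then have e: "{m, x} \<in> edges T" and xv: "x \<in> verts T" by (auto simp: is_walk_Cons2 is_walk_def)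
    have "x \<in> set (tpath b c)" using r Cons by simp
    then have "x \<in> set (tpath b a) \<union> set (tpath a c)" using tpath_triangle(1)[OF b a c] by blast
    then have xac: "x \<in> set (tpath a c)" using xab set_tpath_commute[OF a b] by blast
    have sub: "set (tpath a m) \<subseteq> set (tpath a b)" using tpath_split_sets(4)[OF a b m] .
    have "is_walk T (tpath a m @ [x])"
      using tpath_props(1,3,5)[OF a mv] e xv by (subst is_walk_append) auto
    moreover have "distinct (tpath a m @ [x])" using tpath_props(4)[OF a mv] sub xab by auto
    moreover have "hd (tpath a m @ [x]) = a" using tpath_props(1,2)[OF a mv] by simp
    ultimately have "is_path T a x (tpath a m @ [x])" by (simp add: is_path_def)
    then have "tpath a x = tpath a m @ [x]" by (rule tpath_eqI)
    then have "m \<in> set (tpath a x)" using tpath_props(8)[OF a mv] by simp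
    then have "m \<in> set (tpath a c)" using tpath_split_sets(4)[OF a c xac] by blast
    then show ?thesis using m mbc by blast
  qed
qed

lemma median_unique_wlog:
  assumes a: "a \<in> verts T" and b: "b \<in> verts T" and c: "c \<in> verts T"
    and m: "m \<in> set (tpath a b)" "m \<in> set (tpath b c)" "m \<in> set (tpath a c)"
    and m': "m' \<in> set (tpath a b)" "m' \<in> set (tpath b c)" "m' \<in> set (tpath a c)"
    and mb: "m' \<in> set (tpath m b)"
  shows "m = m'"
proof (rule ccontr)
  assume ne: "m \<noteq> m'"
  have mv: "m \<in> verts T" and m'v: "m' \<in> verts T" using m m' a b tpath_verts by blast+
  have 1: "m \<notin> set (tpath m' b)"
    using tpath_split_sets(2)[OF mv b mb] tpath_props(7)[OF mv m'v] ne by blast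
  have "m' \<in> set (tpath a m) \<union> set (tpath m c)"
    using tpath_split_sets(1)[OF a c m(3)] m'(3) by blast
  moreover have "m' \<notin> set (tpath a m)"
    using tpath_split_sets(2)[OF a b m(1)] mb ne by (metis IntI singletonD)
  ultimately have mc: "m' \<in> set (tpath m c)" by blast
  have 2: "m \<notin> set (tpath m' c)"
    using tpath_split_sets(2)[OF mv c mc] tpath_props(7)[OF mv m'v] ne by blast
  have "m \<in> set (tpath b m') \<union> set (tpath m' c)" using tpath_triangle(1)[OF b m'v c] m(2) by blast
  then show False using 1 2 set_tpath_commute[OF m'v b] by blast
qed

lemma median_unique:
  assumes a: "a \<in> verts T" and b: "b \<in> verts T" and c: "c \<in> verts T"
    and m: "m \<in> set (tpath a b)" "m \<in> set (tpath b c)" "m \<in> set (tpath a c)"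
    and m': "m' \<in> set (tpath a b)" "m' \<in> set (tpath b c)" "m' \<in> set (tpath a c)"
  shows "m = m'"
proof -
  have mv: "m \<in> verts T" using m a b tpath_verts by blast
  have "m' \<in> set (tpath a m) \<union> set (tpath m b)"
    using tpath_split_sets(1)[OF a b m(1)] m'(1) by blast
  then show ?thesis
  proof
    assume "m' \<in> set (tpath m b)"
    then show ?thesis using median_unique_wlog[OF a b c m m'] by blast
  next
    assume "m' \<in> set (tpath a m)"
    then have "m' \<in> set (tpath m a)" using set_tpath_commute[OF a mv] by blast
    moreover have "m \<in> set (tpath b a)" "m' \<in> set (tpath b a)"
      using m m' set_tpath_commute[OF a b] by auto
    ultimately show ?thesis
      using median_unique_wlog[OF b a c _ m(3) m(2) _ m'(3) m'(2)] by blast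
  qed
qed

lemma median_gate_wlog:
  assumes a: "a \<in> verts T" and b: "b \<in> verts T" and c: "c \<in> verts T" and d: "d \<in> verts T"
    and m: "m \<in> set (tpath a c)"
    and x: "x \<in> set (tpath c d)" and xa: "x \<in> set (tpath a m)"
  shows "m \<in> set (tpath c d)"
proof -
  have mv: "m \<in> verts T" using m a c tpath_verts by blast
  have xv: "x \<in> verts T" using x c d tpath_verts by blast
  have mca: "m \<in> set (tpath c a)" using m set_tpath_commute[OF a c] by blast
  have "x \<in> set (tpath m a)" using xa set_tpath_commute[OF a mv] by blast
  then have xca: "x \<in> set (tpath c a)" using tpath_split_sets(5)[OF c a mca] by blast
  have "m \<in> set (tpath c x) \<union> set (tpath x a)" using tpath_split_sets(1)[OF c a xca] mca by blast
  then show ?thesis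
  proof
    assume "m \<in> set (tpath c x)"
    then show ?thesis using tpath_split_sets(4)[OF c d x] by blast
  next
    assume "m \<in> set (tpath x a)"
    then have "m \<in> set (tpath a x)" using set_tpath_commute[OF a xv] by blast
    then have "x = m" using between_antisym[OF a mv xa] by blast
    then show ?thesis using x by simp
  qed
qed

lemma median_gate:
  assumes a: "a \<in> verts T" and b: "b \<in> verts T" and c: "c \<in> verts T" and d: "d \<in> verts T"
    and m: "m \<in> set (tpath a b)" "m \<in> set (tpath b c)" "m \<in> set (tpath a c)"
    and x: "x \<in> set (tpath a b)" "x \<in> set (tpath c d)"
  shows "m \<in> set (tpath c d)"
proof -
  have mv: "m \<in> verts T" using m a b tpath_verts by blast
  have "x \<in> set (tpath a m) \<union> set (tpath m b)" using tpath_split_sets(1)[OF a b m(1)] x(1) by blast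
  then show ?thesis
  proof
    assume "x \<in> set (tpath a m)"
    then show ?thesis using median_gate_wlog[OF a b c d m(3) x(2)] by blast
  next
    assume "x \<in> set (tpath m b)"
    then have "x \<in> set (tpath b m)" using set_tpath_commute[OF b mv] by blast
    moreover have "m \<in> set (tpath b c)" using m by blast
    ultimately show ?thesis using median_gate_wlog[OF b a c d _ x(2)] by blast
  qed
qed

lemma finite_verts: "finite (verts T)" using tree_wf by (simp add: wf_graph_def)

lemma finite_edges: "finite (edges T)"
proof -
  have "edges T \<subseteq> Pow (verts T)" using tree_wf by (auto simp: wf_graph_def)
  then show ?thesis using finite_verts by (meson finite_Pow_iff finite_subset)
qed

lemma edge_ends: "{u, w} \<in> edges T \<Longrightarrow> u \<noteq> w \<and> u \<in> verts T \<and> w \<in> verts T"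
  using tree_wf
    unfolding wf_graph_def
      by (metis doubleton_eq_iff insertI1 insert_absorb2 insert_commute singleton_insert_inj_eq)

lemma low_degree_on_tpath:
  assumes a: "a \<in> verts T" and b: "b \<in> verts T" and deg: "degree T x \<le> 1" and x: "x \<in> set (tpath a b)"
  shows "x = a \<or> x = b"
proof (rule ccontr)
  assume ne: "\<not> (x = a \<or> x = b)"
  obtain A B where AB: "tpath a b = A @ x # B" "tpath a x = A @ [x]" "tpath x b = x # B"
    using tpath_split[OF a b x] by blast
  have xv: "x \<in> verts T" using x a b tpath_verts by blast
  have "A \<noteq> []" using AB(2) tpath_props(2)[OF a xv] ne by auto
  have "B \<noteq> []" using AB(3) tpath_props(3)[OF xv b] ne by auto
  have "is_walk T (A @ [x])" using tpath_props(5)[OF a xv] AB(2) by simp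
  then have e1: "{last A, x} \<in> edges T" using \<open>A \<noteq> []\<close> by (simp add: is_walk_append)
  have "is_walk T (x # B)" using tpath_props(5)[OF xv b] AB(3) by simp
  then have e2: "{x, hd B} \<in> edges T"
    using \<open>B \<noteq> []\<close> by (cases B) (auto simp: is_walk_Cons2)
  have "distinct (A @ x # B)" using tpath_props(4)[OF a b] AB(1) by simp
  then have "last A \<noteq> hd B"
    using \<open>A \<noteq> []\<close> \<open>B \<noteq> []\<close>
      by (metis disjoint_iff distinct_append hd_in_set last_in_set list.set_intros(2))
  then have "{last A, x} \<noteq> {x, hd B}" by (metis doubleton_eq_iff e2 edge_ends)
  moreover have "{{last A, x}, {x, hd B}} \<subseteq> {e \<in> edges T. x \<in> e}" using e1 e2 by auto
  moreover have "finite {e \<in> edges T. x \<in> e}" using finite_edges by simp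
  ultimately have "card {{last A, x}, {x, hd B}} \<le> degree T x" unfolding degree_def by (metis card_mono)
  then show False using deg \<open>{last A, x} \<noteq> {x, hd B}\<close> by simp
qed

definition towards :: "'v \<Rightarrow> 'v \<Rightarrow> 'v" where "towards v y = tpath v y ! 1"

lemma towards_props:
  assumes v: "v \<in> verts T" and y: "y \<in> verts T" and ne: "v \<noteq> y"
  shows "tpath v y = v # tpath (towards v y) y" "{v, towards v y} \<in> edges T" "towards v y \<in> verts T"
    "v \<notin> set (tpath (towards v y) y)" "towards v y \<in> set (tpath v y)"
proof -
  obtain r where r: "tpath v y = v # r" using tpath_props(1,2)[OF v y] by (metis list.collapse)
  have rne: "r \<noteq> []" using r tpath_props(3)[OF v y] ne by auto
  have n: "towards v y = hd r" using r rne by (simp add: towards_def hd_conv_nth)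
  have wr: "is_walk T (v # r)" using tpath_props(5)[OF v y] r by simp
  then have wr': "is_walk T r" using rne is_walk_ConsD by metis
  have "is_path T (hd r) y r" using wr' tpath_props(3,4)[OF v y] r rne by (auto simp: is_path_def)
  then have tr: "tpath (hd r) y = r" by (rule tpath_eqI)
  show "tpath v y = v # tpath (towards v y) y" using r tr n by simp
  show "{v, towards v y} \<in> edges T" using wr rne n by (cases r) (auto simp: is_walk_Cons2)
  then show "towards v y \<in> verts T" using edge_ends by blast
  show "v \<notin> set (tpath (towards v y) y)" using tpath_props(4)[OF v y] r tr n by simp
  show "towards v y \<in> set (tpath v y)" using r rne n by simp
qed

lemma towards_eq:
  assumes v: "v \<in> verts T" and y: "y \<in> verts T" and m: "m \<in> set (tpath v y)" and ne: "m \<noteq> v"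
  shows "towards v y = towards v m"
proof -
  have mv: "m \<in> verts T" using m v y tpath_verts by blast
  obtain A B where AB: "tpath v y = A @ m # B" "tpath v m = A @ [m]"
    using tpath_split[OF v y m] by blast
  have "A \<noteq> []" using AB(2) tpath_props(2)[OF v mv] ne by auto
  then obtain a0 A' where A: "A = a0 # A'" by (cases A) auto
  show ?thesis unfolding towards_def using AB A by (cases A') auto
qed

lemma on_tpath_iff_towards_differ:
  assumes v: "v \<in> verts T" and x: "x \<in> verts T" and y: "y \<in> verts T" and xv: "x \<noteq> v" and yv: "y \<noteq> v"
  shows "v \<in> set (tpath x y) \<longleftrightarrow> towards v x \<noteq> towards v y"
proof
  assume vin: "v \<in> set (tpath x y)"
  show "towards v x \<noteq> towards v y"
  proof
    assume eq: "towards v x = towards v y"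
    have nv: "towards v x \<in> verts T" using towards_props(3)[OF v x] xv by auto
    have "v \<notin> set (tpath (towards v x) x)" using towards_props(4)[OF v x] xv by auto
    then have 1: "v \<notin> set (tpath x (towards v x))" using set_tpath_commute[OF x nv] by blast
    have 2: "v \<notin> set (tpath (towards v x) y)" using towards_props(4)[OF v y] yv eq by auto
    show False using tpath_triangle(1)[OF x nv y] 1 2 vin by blast
  qed
next
  assume neq: "towards v x \<noteq> towards v y"
  show "v \<in> set (tpath x y)"
  proof (rule ccontr)
    assume vn: "v \<notin> set (tpath x y)"
    obtain m where m: "m \<in> set (tpath v x)" "m \<in> set (tpath x y)" "m \<in> set (tpath v y)"
      using median_exists[OF v x y] by blast
    have "m \<noteq> v" using m(2) vn by blast
    then have "towards v x = towards v m" "towards v y = towards v m"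
      using towards_eq[OF v x m(1)] towards_eq[OF v y m(3)] by auto
    then show False using neq by simp
  qed
qed

lemma tpath_edge: assumes "{u, w} \<in> edges T" shows "tpath u w = [u, w]"
proof -
  have "u \<noteq> w" "u \<in> verts T" "w \<in> verts T" using edge_ends[OF assms] by auto
  then have "is_path T u w [u, w]" using assms by (simp add: is_path_def is_walk_Cons2)
  then show ?thesis by (rule tpath_eqI)
qed

lemma towards_adjacent: "{v, n} \<in> edges T \<Longrightarrow> towards v n = n"
  unfolding towards_def using tpath_edge by simp

lemma towards_edge_in_tpath:
  assumes "v \<in> verts T" "y \<in> verts T" "v \<noteq> y"
  shows "{v, towards v y} \<in> list_edges (tpath v y)"
proof -
  have "tpath v y = v # tpath (towards v y) y" using towards_props(1)[OF assms] .
  moreover obtain r where "tpath (towards v y) y = towards v y # r"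
    using tpath_props(1,2)[OF towards_props(3)[OF assms] assms(2)] by (metis list.collapse)
  ultimately show ?thesis by (simp add: list_edges_Cons2)
qed

lemma tpath_convex:
  assumes a: "a \<in> verts T" and b: "b \<in> verts T" and u: "u \<in> set (tpath a b)" and w: "w \<in> set (tpath a b)"
  shows "set (tpath u w) \<subseteq> set (tpath a b)"
proof -
  have uv: "u \<in> verts T" and wv: "w \<in> verts T" using tpath_verts a b u w by blast+
  have "w \<in> set (tpath a u) \<union> set (tpath u b)" using tpath_split_sets(1)[OF a b u] w by blast
  then show ?thesis
  proof
    assume "w \<in> set (tpath u b)"
    then show ?thesis using tpath_split_sets(4)[OF uv b] tpath_split_sets(5)[OF a b u] by blast
  next
    assume "w \<in> set (tpath a u)"
    then have "set (tpath w u) \<subseteq> set (tpath a u)" using tpath_split_sets(5)[OF a uv] by blast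
    then show ?thesis using tpath_split_sets(4)[OF a b u] set_tpath_commute[OF uv wv] by blast
  qed
qed

lemma tpath_disjoint_past:
  assumes a: "a \<in> verts T" and b: "b \<in> verts T" and x: "x \<in> verts T" and v: "v \<in> verts T"
    and vab: "v \<in> set (tpath a b)" and vax: "v \<notin> set (tpath a x)"
  shows "set (tpath a x) \<inter> set (tpath b v) = {}"
proof (rule ccontr)
  assume "set (tpath a x) \<inter> set (tpath b v) \<noteq> {}"
  then obtain y where yax: "y \<in> set (tpath a x)" and ybv: "y \<in> set (tpath b v)" by blast
  have yv: "y \<noteq> v" using yax vax by blast
  have yV: "y \<in> verts T" using yax a x tpath_verts by blast
  have 1: "v \<notin> set (tpath a y)" using tpath_split_sets(4)[OF a x yax] vax by blast
  have 2: "v \<notin> set (tpath y b)"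
  proof
    assume "v \<in> set (tpath y b)"
    then have "v \<in> set (tpath b y)" using set_tpath_commute[OF yV b] by simp
    moreover have "v \<in> set (tpath y v)" using tpath_props(8)[OF yV v] .
    ultimately show False using tpath_split_sets(2)[OF b v ybv] yv by (metis IntI singletonD)
  qed
  have "set (tpath a b) \<subseteq> set (tpath a y) \<union> set (tpath y b)"
    using tpath_triangle(1)[OF a yV b] .
  then show False using 1 2 vab by blast
qed

lemma median_branch_disjoint:
  assumes a: "a \<in> verts T" and b: "b \<in> verts T" and c: "c \<in> verts T" and x: "x \<in> verts T"
    and v: "v \<in> set (tpath a b)" "v \<in> set (tpath a c)" "v \<in> set (tpath b c)" and vax: "v \<notin> set (tpath a x)"
  shows "set (tpath x a) \<inter> set (tpath b c) = {}"
proof -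
  have vV: "v \<in> verts T" using v a b tpath_verts by blast
  have "set (tpath a x) \<inter> set (tpath b v) = {}" "set (tpath a x) \<inter> set (tpath c v) = {}"
    using tpath_disjoint_past[OF a b x vV v(1) vax] tpath_disjoint_past[OF a c x vV v(2) vax] .
  moreover have "set (tpath b c) = set (tpath b v) \<union> set (tpath c v)"
    using tpath_split_sets(1)[OF b c v(3)] set_tpath_commute[OF vV c] by simp
  ultimately show ?thesis using set_tpath_commute[OF a x] by auto
qed

end

section \<open>Spans and restrictions of phylogenetic trees\<close>

locale phylo = tree T for T :: "'v graph" +
  fixes X :: "'v set"
  assumes phylo: "phylo_tree X T"
begin

lemma X_verts: "X \<subseteq> verts T" using phylo by (simp add: phylo_tree_def)
lemma degree_leaf: "x \<in> X \<Longrightarrow> degree T x \<le> 1" using phylo by (simp add: phylo_tree_def)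
lemma degree_internal: "v \<in> verts T \<Longrightarrow> v \<notin> X \<Longrightarrow> degree T v = 3"
  using phylo by (simp add: phylo_tree_def)

lemma edges_doubleton: "\<forall>e\<in>edges T. \<exists>x y. e = {x, y}"
  using tree_wf unfolding wf_graph_def by blast

lemma degree_eq_card_neighbours: "degree T v = card {n. {v, n} \<in> edges T}"
  unfolding degree_def
    using card_incident_eq_card_neighbours[of "edges T" v] edges_doubleton finite_edges by blast

lemma finite_neighbours: "finite {n. {v, n} \<in> edges T}"
proof -
  have "{n. {v, n} \<in> edges T} \<subseteq> verts T" using edge_ends by blast
  then show ?thesis using finite_verts finite_subset by blast
qed

lemma leaf_on_tpath: "x \<in> X \<Longrightarrow> a \<in> verts T \<Longrightarrow> b \<in> verts T \<Longrightarrow> x \<in> set (tpath a b) \<Longrightarrow> x = a \<or> x = b"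
  using low_degree_on_tpath degree_leaf by blast

lemma median_not_leaf:
  assumes "a \<in> X" "b \<in> X" "c \<in> X" "a \<noteq> b" "b \<noteq> c" "a \<noteq> c"
    and "m \<in> set (tpath a b)" "m \<in> set (tpath b c)" "m \<in> set (tpath a c)"
  shows "m \<notin> X"
proof
  assume mX: "m \<in> X"
  have v: "a \<in> verts T" "b \<in> verts T" "c \<in> verts T" using assms(1-3) X_verts by auto
  have "m = a \<or> m = b" "m = b \<or> m = c" "m = a \<or> m = c"
    using leaf_on_tpath[OF mX v(1,2) assms(7)] leaf_on_tpath[OF mX v(2,3) assms(8)]
      leaf_on_tpath[OF mX v(1,3) assms(9)] by auto
  then show False using assms(4-6) by auto
qed

lemma list_edges_tpath_subset: "a \<in> verts T \<Longrightarrow> b \<in> verts T \<Longrightarrow> list_edges (tpath a b) \<subseteq> edges T"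
  using list_edges_subset tpath_props(5) by blast

definition span_vs :: "'v set \<Rightarrow> 'v set" where
  "span_vs Y = {v. \<exists>a\<in>Y. \<exists>b\<in>Y. v \<in> set (tpath a b)}"
definition span_es :: "'v set \<Rightarrow> 'v set set" where
  "span_es Y = {e. \<exists>a\<in>Y. \<exists>b\<in>Y. e \<in> list_edges (tpath a b)}"
definition medians :: "'v set \<Rightarrow> 'v set" where
  "medians Y = {v. \<exists>a\<in>Y. \<exists>b\<in>Y. \<exists>c\<in>Y. a \<noteq> b \<and> b \<noteq> c \<and> a \<noteq> c \<and>
      v \<in> set (tpath a b) \<and> v \<in> set (tpath b c) \<and> v \<in> set (tpath a c)}"
definition restr_vs :: "'v set \<Rightarrow> 'v set" where
  "restr_vs Y = Y \<union> medians Y"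
definition pairs_through :: "'v set \<Rightarrow> 'v \<Rightarrow> ('v \<times> 'v) set" where
  "pairs_through Y v = {(a, b). a \<in> Y \<and> b \<in> Y \<and> v \<in> set (tpath a b)}"

context
  fixes Y assumes Y: "Y \<subseteq> X"
begin

lemma Y_verts: "y \<in> Y \<Longrightarrow> y \<in> verts T" using Y X_verts by blast

lemma span_eq: "span T Y = (span_vs Y, span_es Y)"
proof -
  have 1: "\<And>a b p. a \<in> Y \<Longrightarrow> b \<in> Y \<Longrightarrow> is_path T a b p \<longleftrightarrow> p = tpath a b"
    using tpath_eqI tpath_is_path Y_verts by blast
  have "\<Union>{set p | p a b. a \<in> Y \<and> b \<in> Y \<and> is_path T a b p} = span_vs Y"
  proof (rule set_eqI, rule iffI)
    fix x assume "x \<in> \<Union>{set p | p a b. a \<in> Y \<and> b \<in> Y \<and> is_path T a b p}"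
    then obtain p a b where "x \<in> set p" "a \<in> Y" "b \<in> Y" "is_path T a b p" by auto
    then show "x \<in> span_vs Y" unfolding span_vs_def using 1 by auto
  next
    fix x assume "x \<in> span_vs Y"
    then obtain a b where "x \<in> set (tpath a b)" "a \<in> Y" "b \<in> Y" unfolding span_vs_def by auto
    then show "x \<in> \<Union>{set p | p a b. a \<in> Y \<and> b \<in> Y \<and> is_path T a b p}"
      using 1 by blast
  qed
  moreover have "\<Union>{list_edges p | p a b. a \<in> Y \<and> b \<in> Y \<and> is_path T a b p} = span_es Y"
  proof (rule set_eqI, rule iffI)
    fix x assume "x \<in> \<Union>{list_edges p | p a b. a \<in> Y \<and> b \<in> Y \<and> is_path T a b p}"
    then obtain p a b where "x \<in> list_edges p" "a \<in> Y" "b \<in> Y" "is_path T a b p" by auto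
    then show "x \<in> span_es Y" unfolding span_es_def using 1 by auto
  next
    fix x assume "x \<in> span_es Y"
    then obtain a b where "x \<in> list_edges (tpath a b)" "a \<in> Y" "b \<in> Y"
      unfolding span_es_def by auto
    then show "x \<in> \<Union>{list_edges p | p a b. a \<in> Y \<and> b \<in> Y \<and> is_path T a b p}"
      using 1 by blast
  qed
  ultimately show ?thesis unfolding span_def by simp
qed

lemma span_vs_verts: "span_vs Y \<subseteq> verts T" unfolding span_vs_def using Y_verts tpath_verts by blast
lemma span_es_edges: "span_es Y \<subseteq> edges T" unfolding span_es_def
  using Y_verts list_edges_tpath_subset by blast
lemma Y_span_vs: "Y \<subseteq> span_vs Y" unfolding span_vs_def using Y_verts tpath_props(7) by blast
lemma medians_span_vs: "medians Y \<subseteq> span_vs Y" unfolding span_vs_def medians_def by blast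
lemma restr_vs_span_vs: "restr_vs Y \<subseteq> span_vs Y" unfolding restr_vs_def
  using Y_span_vs medians_span_vs by blast
lemma medians_disjoint: "medians Y \<inter> Y = {}"
proof -
  { fix v assume "v \<in> medians Y" "v \<in> Y"
    then obtain a b c where abc: "a \<in> Y" "b \<in> Y" "c \<in> Y" "a \<noteq> b" "b \<noteq> c" "a \<noteq> c"
      "v \<in> set (tpath a b)" "v \<in> set (tpath b c)" "v \<in> set (tpath a c)"
        unfolding medians_def by blast
    have "v \<in> X" using \<open>v \<in> Y\<close> Y by blast
    have "v = a \<or> v = b" using leaf_on_tpath[OF \<open>v \<in> X\<close> _ _ abc(7)] Y_verts abc by blast
    moreover have "v = b \<or> v = c"
      using leaf_on_tpath[OF \<open>v \<in> X\<close> _ _ abc(8)] Y_verts abc by blast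
    moreover have "v = a \<or> v = c"
      using leaf_on_tpath[OF \<open>v \<in> X\<close> _ _ abc(9)] Y_verts abc by blast
    ultimately have False using abc by auto }
  then show ?thesis by blast
qed

lemma tpath_span_convex:
  assumes u: "u \<in> span_vs Y" and w: "w \<in> span_vs Y"
  shows "set (tpath u w) \<subseteq> span_vs Y" "list_edges (tpath u w) \<subseteq> span_es Y"
proof -
  obtain a b where ab: "a \<in> Y" "b \<in> Y" "u \<in> set (tpath a b)"
    using u unfolding span_vs_def by blast
  obtain c d where cd: "c \<in> Y" "d \<in> Y" "w \<in> set (tpath c d)"
    using w unfolding span_vs_def by blast
  have av: "a \<in> verts T" and bv: "b \<in> verts T" and cv: "c \<in> verts T" and dv: "d \<in> verts T"
    using ab cd Y_verts by auto
  have uv: "u \<in> verts T" and wv: "w \<in> verts T" using u w span_vs_verts by auto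
  have s1: "set (tpath u w) \<subseteq> set (tpath u a) \<union> set (tpath a w)"
    using tpath_triangle(1)[OF uv av wv] .
  have s2: "set (tpath u a) \<subseteq> set (tpath a b)"
    using tpath_split_sets(4)[OF av bv ab(3)] set_tpath_commute[OF av uv] by simp
  have s3: "set (tpath a w) \<subseteq> set (tpath a c) \<union> set (tpath c w)"
    using tpath_triangle(1)[OF av cv wv] .
  have s4: "set (tpath c w) \<subseteq> set (tpath c d)" using tpath_split_sets(4)[OF cv dv cd(3)] .
  show "set (tpath u w) \<subseteq> span_vs Y" using s1 s2 s3 s4 ab cd unfolding span_vs_def by blast
  have e1: "list_edges (tpath u w) \<subseteq> list_edges (tpath u a) \<union> list_edges (tpath a w)"
    using tpath_triangle(2)[OF uv av wv] .
  have e2: "list_edges (tpath u a) \<subseteq> list_edges (tpath a b)"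
    using tpath_split_sets(6)[OF av bv ab(3)] list_edges_tpath_commute[OF av uv] by simp
  have e3: "list_edges (tpath a w) \<subseteq> list_edges (tpath a c) \<union> list_edges (tpath c w)"
    using tpath_triangle(2)[OF av cv wv] .
  have e4: "list_edges (tpath c w) \<subseteq> list_edges (tpath c d)"
    using tpath_split_sets(6)[OF cv dv cd(3)] .
  show "list_edges (tpath u w) \<subseteq> span_es Y" using e1 e2 e3 e4 ab cd unfolding span_es_def by blast
qed

lemma degree_span: "degree (span T Y) v = card {n. {v, n} \<in> span_es Y}"
proof -
  have "degree (span T Y) v = card {e \<in> span_es Y. v \<in> e}" by (simp add: degree_def span_eq edges_def)
  also have "\<dots> = card {n. {v, n} \<in> span_es Y}"
    using card_incident_eq_card_neighbours[of "span_es Y" v] edges_doubleton span_es_edges finite_edges finite_subset by blast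
  finally show ?thesis .
qed

lemma span_vs_on_tpath_to:
  assumes "v \<in> span_vs Y" "y \<in> Y"
  obtains c where "c \<in> Y" "v \<in> set (tpath c y)"
proof -
  obtain a b where ab: "a \<in> Y" "b \<in> Y" "v \<in> set (tpath a b)"
    using assms(1) unfolding span_vs_def by blast
  have v: "a \<in> verts T" "b \<in> verts T" "y \<in> verts T" using ab assms(2) Y_verts by auto
  have "v \<in> set (tpath a y) \<union> set (tpath y b)" using tpath_triangle(1)[OF v(1,3,2)] ab(3) by blast
  then show ?thesis using that set_tpath_commute[OF v(3,2)] ab by blast
qed

lemma span_neighbours_eq:
  assumes v: "v \<in> span_vs Y" "v \<notin> Y"
  shows "{n. {v, n} \<in> span_es Y} = towards v ` Y"
proof
  have vv: "v \<in> verts T" using v span_vs_verts by blast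
  show "{n. {v, n} \<in> span_es Y} \<subseteq> towards v ` Y"
  proof
    fix n assume "n \<in> {n. {v, n} \<in> span_es Y}"
    then obtain a b where ab: "a \<in> Y" "b \<in> Y" "{v, n} \<in> list_edges (tpath a b)"
      unfolding span_es_def by blast
    have av: "a \<in> verts T" and bv: "b \<in> verts T" using ab Y_verts by auto
    have ed: "{v, n} \<in> edges T" using ab(3) list_edges_tpath_subset[OF av bv] by blast
    then have nv: "n \<noteq> v" using edge_ends by auto
    have "n \<in> set (tpath a b)" "v \<in> set (tpath a b)" using list_edges_in_set[OF ab(3)] by auto
    then have "n \<in> set (tpath a v) \<union> set (tpath v b)" using tpath_split_sets(1)[OF av bv] by blast
    then obtain y where y: "y \<in> Y" "n \<in> set (tpath v y)" using set_tpath_commute[OF av vv] ab by blast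
    have "towards v y = towards v n" using towards_eq[OF vv _ y(2)] Y_verts[OF y(1)] nv by simp
    then show "n \<in> towards v ` Y" using y towards_adjacent[OF ed] by force
  qed
  show "towards v ` Y \<subseteq> {n. {v, n} \<in> span_es Y}"
  proof
    fix n assume "n \<in> towards v ` Y"
    then obtain y where y: "y \<in> Y" "n = towards v y" by blast
    have yv: "y \<in> verts T" using y Y_verts by auto
    obtain c where c: "c \<in> Y" "v \<in> set (tpath c y)" using span_vs_on_tpath_to[OF v(1) y(1)] .
    have "list_edges (tpath v y) \<subseteq> list_edges (tpath c y)"
      using tpath_split_sets(7)[OF Y_verts[OF c(1)] yv c(2)] .
    moreover have "{v, n} \<in> list_edges (tpath v y)" using towards_edge_in_tpath[OF vv yv] y v(2) by blast
    ultimately show "n \<in> {n. {v, n} \<in> span_es Y}" using c y unfolding span_es_def by blast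
  qed
qed

lemma span_interior_not_leaf:
  assumes "v \<in> span_vs Y" "v \<notin> Y"
  shows "v \<notin> X"
proof -
  obtain a b where "a \<in> Y" "b \<in> Y" "v \<in> set (tpath a b)"
    using assms(1) unfolding span_vs_def by blast
  then show ?thesis using leaf_on_tpath[of v a b] Y_verts assms(2) by blast
qed

lemma towards_span_neighbours:
  assumes "v \<in> span_vs Y" "v \<notin> Y"
  shows "towards v ` Y \<subseteq> {n. {v, n} \<in> edges T}" "finite (towards v ` Y)"
proof -
  show sub: "towards v ` Y \<subseteq> {n. {v, n} \<in> edges T}"
    using span_neighbours_eq[OF assms] span_es_edges by blast
  show "finite (towards v ` Y)" using finite_subset[OF sub finite_neighbours] .
qed

lemma card_towards_le_3:
  assumes v: "v \<in> span_vs Y" "v \<notin> Y"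
  shows "card (towards v ` Y) \<le> 3"
proof -
  have "card (towards v ` Y) \<le> card {n. {v, n} \<in> edges T}"
    using towards_span_neighbours[OF v] finite_neighbours card_mono by blast
  also have "\<dots> = 3"
    using degree_eq_card_neighbours degree_internal span_vs_verts span_interior_not_leaf[OF v] v by auto
  finally show ?thesis .
qed

lemma card_towards_ge_2:
  assumes v: "v \<in> span_vs Y" "v \<notin> Y"
  shows "card (towards v ` Y) \<ge> 2"
proof -
  have vv: "v \<in> verts T" using v span_vs_verts by blast
  obtain a b where ab: "a \<in> Y" "b \<in> Y" "v \<in> set (tpath a b)"
    using v unfolding span_vs_def by blast
  then have "towards v a \<noteq> towards v b"
    using on_tpath_iff_towards_differ[OF vv, of a b] Y_verts v by blast
  then have "card {towards v a, towards v b} = 2" by simp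
  moreover have "{towards v a, towards v b} \<subseteq> towards v ` Y" using ab by blast
  ultimately show ?thesis using card_mono[OF towards_span_neighbours(2)[OF v]] by metis
qed

lemma medians_iff_card_towards:
  assumes v: "v \<in> span_vs Y" "v \<notin> Y"
  shows "v \<in> medians Y \<longleftrightarrow> card (towards v ` Y) \<ge> 3"
proof -
  have vv: "v \<in> verts T" using v span_vs_verts by blast
  have differ: "v \<in> set (tpath a b) \<longleftrightarrow> towards v a \<noteq> towards v b" if "a \<in> Y" "b \<in> Y" for a b
    using on_tpath_iff_towards_differ[OF vv] Y_verts that v by blast
  show ?thesis
  proof
    assume "v \<in> medians Y"
    then obtain a b c where abc: "a \<in> Y" "b \<in> Y" "c \<in> Y"
      "v \<in> set (tpath a b)" "v \<in> set (tpath b c)" "v \<in> set (tpath a c)"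
        unfolding medians_def by blast
    then have "card {towards v a, towards v b, towards v c} = 3" using differ by simp
    moreover have "{towards v a, towards v b, towards v c} \<subseteq> towards v ` Y" using abc by blast
    ultimately show "card (towards v ` Y) \<ge> 3"
      using card_mono[OF towards_span_neighbours(2)[OF v]] by metis
  next
    assume "card (towards v ` Y) \<ge> 3"
    then obtain a b c where "a \<in> Y" "b \<in> Y" "c \<in> Y"
      "towards v a \<noteq> towards v b" "towards v b \<noteq> towards v c" "towards v a \<noteq> towards v c"
      by (elim card_ge_3_obtain) blast
    then show "v \<in> medians Y" using differ unfolding medians_def by fastforce
  qed
qed

lemma degree_span_ne_2_iff:
  assumes v: "v \<in> span_vs Y"
  shows "degree (span T Y) v \<noteq> 2 \<longleftrightarrow> v \<in> restr_vs Y"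
proof (cases "v \<in> Y")
  case True
  have vv: "v \<in> verts T" using v span_vs_verts by blast
  have "{n. {v, n} \<in> span_es Y} \<subseteq> {n. {v, n} \<in> edges T}" using span_es_edges by blast
  then have "card {n. {v, n} \<in> span_es Y} \<le> card {n. {v, n} \<in> edges T}"
    using finite_neighbours card_mono by blast
  also have "\<dots> \<le> 1" using degree_eq_card_neighbours degree_leaf True Y by auto
  finally show ?thesis using True degree_span restr_vs_def by auto
next
  case False
  have "degree (span T Y) v = card (towards v ` Y)" using degree_span span_neighbours_eq[OF v False] by simp
  then show ?thesis
    using card_towards_le_3[OF v False] card_towards_ge_2[OF v False] medians_iff_card_towards[OF v False]
      False restr_vs_def by auto
qed

lemma restr_verts: "verts (restr T Y) = restr_vs Y"
  unfolding restr_def Let_def verts_def using degree_span_ne_2_iff restr_vs_span_vs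
  by (auto simp: span_eq verts_def[symmetric]) (auto simp: verts_def)

lemma restr_eq: "restr T Y = (restr_vs Y, {{u, w} | u w. u \<in> restr_vs Y \<and> w \<in> restr_vs Y \<and> u \<noteq> w \<and>
    (\<exists>p. is_path (span T Y) u w p \<and> (\<forall>i. 0 < i \<and> Suc i < length p \<longrightarrow> degree (span T Y) (p ! i) = 2))})"
proof -
  have "{v \<in> verts (span T Y). degree (span T Y) v \<noteq> 2} = restr_vs Y"
    using degree_span_ne_2_iff restr_vs_span_vs by (auto simp: span_eq verts_def)
  then show ?thesis unfolding restr_def Let_def by simp
qed

lemma is_path_span_iff:
  assumes u: "u \<in> span_vs Y" and w: "w \<in> span_vs Y"
  shows "is_path (span T Y) u w p \<longleftrightarrow> p = tpath u w"
proof
  assume h: "is_path (span T Y) u w p"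
  have "is_walk T p" using h span_vs_verts span_es_edges
    unfolding is_path_def is_walk_def by (auto simp: span_eq verts_def edges_def)
  then have "is_path T u w p" using h by (simp add: is_path_def)
  then show "p = tpath u w" using tpath_eqI by simp
next
  assume p: "p = tpath u w"
  have uv: "u \<in> verts T" and wv: "w \<in> verts T" using u w span_vs_verts by auto
  have "set (tpath u w) \<subseteq> span_vs Y" "list_edges (tpath u w) \<subseteq> span_es Y"
    using tpath_span_convex[OF u w] by auto
  then have "is_walk (span T Y) (tpath u w)" using tpath_props(1)[OF uv wv]
    unfolding is_walk_def list_edges_def by (auto simp: span_eq verts_def edges_def)
  then show "is_path (span T Y) u w p" using p tpath_props[OF uv wv] by (simp add: is_path_def)
qed

lemma suppressed_path_iff:
  assumes u: "u \<in> restr_vs Y" and w: "w \<in> restr_vs Y"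
  shows "(\<exists>p. is_path (span T Y) u w p \<and> (\<forall>i. 0 < i \<and> Suc i < length p \<longrightarrow> degree (span T Y) (p ! i) = 2))
     \<longleftrightarrow> (\<forall>z\<in>restr_vs Y. z \<in> set (tpath u w) \<longrightarrow> z = u \<or> z = w)"
proof -
  have uV: "u \<in> span_vs Y" and wV: "w \<in> span_vs Y" using u w restr_vs_span_vs by auto
  have uv: "u \<in> verts T" and wv: "w \<in> verts T" using uV wV span_vs_verts by auto
  let ?p = "tpath u w"
  have sub: "set ?p \<subseteq> span_vs Y" using tpath_span_convex[OF uV wV] by simp
  have "(\<forall>i. 0 < i \<and> Suc i < length ?p \<longrightarrow> degree (span T Y) (?p ! i) = 2) \<longleftrightarrow>
      (\<forall>z\<in>set ?p. z \<noteq> u \<and> z \<noteq> w \<longrightarrow> degree (span T Y) z = 2)"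
    using distinct_interior_iff[of ?p] tpath_props[OF uv wv] by simp
  also have "\<dots> \<longleftrightarrow> (\<forall>z\<in>restr_vs Y. z \<in> set ?p \<longrightarrow> z = u \<or> z = w)"
    using degree_span_ne_2_iff sub by blast
  finally show ?thesis using is_path_span_iff[OF uV wV] by auto
qed

definition restr_adj :: "'v \<Rightarrow> 'v \<Rightarrow> bool" where
  "restr_adj u w \<longleftrightarrow> u \<noteq> w \<and> (\<forall>z\<in>restr_vs Y. z \<in> set (tpath u w) \<longrightarrow> z = u \<or> z = w)"

lemma restr_adj_commute: "u \<in> restr_vs Y \<Longrightarrow> w \<in> restr_vs Y \<Longrightarrow> restr_adj u w \<longleftrightarrow> restr_adj w u"
  unfolding restr_adj_def using set_tpath_commute restr_vs_span_vs span_vs_verts by blast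

lemma restr_edges_iff:
  assumes u: "u \<in> restr_vs Y" and w: "w \<in> restr_vs Y"
  shows "{u, w} \<in> edges (restr T Y) \<longleftrightarrow> restr_adj u w"
proof
  assume "{u, w} \<in> edges (restr T Y)"
  then obtain u' w' where uw: "{u, w} = {u', w'}" "u' \<in> restr_vs Y" "w' \<in> restr_vs Y" "u' \<noteq> w'"
    "\<exists>p. is_path (span T Y) u' w' p \<and> (\<forall>i. 0 < i \<and> Suc i < length p \<longrightarrow> degree (span T Y) (p ! i) = 2)"
    unfolding restr_eq edges_def by auto
  then have "\<forall>z\<in>restr_vs Y. z \<in> set (tpath u' w') \<longrightarrow> z = u' \<or> z = w'"
    using suppressed_path_iff[OF uw(2,3)] by blast
  then have "restr_adj u' w'" unfolding restr_adj_def using uw by blast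
  moreover have "(u = u' \<and> w = w') \<or> (u = w' \<and> w = u')"
    using uw(1) by (simp add: doubleton_eq_iff)
  ultimately show "restr_adj u w" using uw(2,3) restr_adj_commute by blast
next
  assume a: "restr_adj u w"
  then have "\<exists>p. is_path (span T Y) u w p \<and>
      (\<forall>i. 0 < i \<and> Suc i < length p \<longrightarrow> degree (span T Y) (p ! i) = 2)"
    using suppressed_path_iff[OF u w] unfolding restr_adj_def by blast
  then show "{u, w} \<in> edges (restr T Y)"
    using u w a unfolding restr_eq edges_def snd_conv restr_adj_def by blast
qed

lemma pairs_through_inj:
  assumes u: "u \<in> restr_vs Y" and w: "w \<in> restr_vs Y" and eq: "pairs_through Y u = pairs_through Y w"
  shows "u = w"
proof (cases "u \<in> Y")
  case True
  have uv: "u \<in> verts T" using True Y_verts by blast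
  have "(u, u) \<in> pairs_through Y u" unfolding pairs_through_def
    using True tpath_props(7)[OF uv uv] by simp
  then have "w \<in> set (tpath u u)" using eq unfolding pairs_through_def by simp
  then show ?thesis using tpath_refl[OF uv] by simp
next
  case False
  then have "u \<in> medians Y" using u restr_vs_def by blast
  then obtain a b c where abc: "a \<in> Y" "b \<in> Y" "c \<in> Y"
      "u \<in> set (tpath a b)" "u \<in> set (tpath b c)" "u \<in> set (tpath a c)"
        unfolding medians_def by blast
  then have "w \<in> set (tpath a b)" "w \<in> set (tpath b c)" "w \<in> set (tpath a c)"
    using eq unfolding pairs_through_def by blast+
  then show ?thesis using median_unique[of a b c u w] abc Y_verts by blast
qed

lemma exists_leaf_beyond:
  assumes u: "u \<in> restr_vs Y" and w: "w \<in> verts T" and z: "z \<in> verts T" and zn: "z \<notin> set (tpath u w)"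
  shows "\<exists>a\<in>Y. u \<in> set (tpath a w) \<and> z \<notin> set (tpath a w)"
proof (cases "u \<in> Y")
  case True
  then show ?thesis using zn tpath_props(7) Y_verts w by blast
next
  case False
  then have uM: "u \<in> medians Y" using u restr_vs_def by blast
  then obtain a b c where abc: "a \<in> Y" "b \<in> Y" "c \<in> Y" "a \<noteq> b" "b \<noteq> c" "a \<noteq> c"
      "u \<in> set (tpath a b)" "u \<in> set (tpath b c)" "u \<in> set (tpath a c)"
        unfolding medians_def by blast
  have uv: "u \<in> verts T" using u restr_vs_span_vs span_vs_verts by blast
  have abcv: "a \<in> verts T" "b \<in> verts T" "c \<in> verts T" using abc Y_verts by auto
  have ne: "a \<noteq> u" "b \<noteq> u" "c \<noteq> u" using abc False by auto
  have d: "towards u a \<noteq> towards u b" "towards u b \<noteq> towards u c" "towards u a \<noteq> towards u c"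
    using on_tpath_iff_towards_differ[OF uv] abcv ne abc by blast+
  have "\<exists>r\<in>{a, b, c}. towards u r \<noteq> towards u z \<and> towards u r \<noteq> towards u w"
    using d by auto
  then obtain r where r: "r \<in> {a, b, c}" "towards u r \<noteq> towards u z" "towards u r \<noteq> towards u w" by blast
  have rY: "r \<in> Y" and rv: "r \<in> verts T" and rne: "r \<noteq> u" using r abc abcv ne by auto
  have zu: "z \<noteq> u" using zn tpath_props(7)[OF uv w] by blast
  have urw: "u \<in> set (tpath r w)"
  proof (cases "w = u")
    case True then show ?thesis using tpath_props(8)[OF rv w] by simp
  next
    case False then show ?thesis using on_tpath_iff_towards_differ[OF uv rv w rne False] r by blast
  qed
  have "z \<notin> set (tpath r w)"
  proof
    assume "z \<in> set (tpath r w)"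
    then have "z \<in> set (tpath r u) \<union> set (tpath u w)"
      using tpath_split_sets(1)[OF rv w urw] by blast
    then have "z \<in> set (tpath u r)" using zn set_tpath_commute[OF rv uv] by blast
    then have "towards u r = towards u z" using towards_eq[OF uv rv _ zu] by blast
    then show False using r by simp
  qed
  then show ?thesis using rY urw by blast
qed

lemma on_tpath_iff_pairs_through:
  assumes u: "u \<in> restr_vs Y" and w: "w \<in> restr_vs Y" and z: "z \<in> restr_vs Y"
  shows "z \<in> set (tpath u w) \<longleftrightarrow> pairs_through Y u \<inter> pairs_through Y w \<subseteq> pairs_through Y z"
proof
  assume zin: "z \<in> set (tpath u w)"
  show "pairs_through Y u \<inter> pairs_through Y w \<subseteq> pairs_through Y z"
  proof
    fix ab assume "ab \<in> pairs_through Y u \<inter> pairs_through Y w"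
    then obtain a b where ab: "ab = (a, b)" "a \<in> Y" "b \<in> Y" "u \<in> set (tpath a b)" "w \<in> set (tpath a b)"
      unfolding pairs_through_def by auto
    have "z \<in> set (tpath a b)" using tpath_convex[of a b u w] ab Y_verts zin by blast
    then show "ab \<in> pairs_through Y z" using ab unfolding pairs_through_def by auto
  qed
next
  assume sub: "pairs_through Y u \<inter> pairs_through Y w \<subseteq> pairs_through Y z"
  show "z \<in> set (tpath u w)"
  proof (rule ccontr)
    assume zn: "z \<notin> set (tpath u w)"
    have uv: "u \<in> verts T" and wv: "w \<in> verts T" and zv: "z \<in> verts T"
      using u w z restr_vs_span_vs span_vs_verts by blast+
    obtain a where a: "a \<in> Y" "u \<in> set (tpath a w)" "z \<notin> set (tpath a w)"
      using exists_leaf_beyond[OF u wv zv zn] by blast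
    have av: "a \<in> verts T" using a Y_verts by blast
    have "z \<notin> set (tpath w a)" using a set_tpath_commute[OF av wv] by blast
    then obtain b where b: "b \<in> Y" "w \<in> set (tpath b a)" "z \<notin> set (tpath b a)"
      using exists_leaf_beyond[OF w av zv] by blast
    have bv: "b \<in> verts T" using b Y_verts by blast
    have wab: "w \<in> set (tpath a b)" "z \<notin> set (tpath a b)"
      using b set_tpath_commute[OF av bv] by blast+
    have uab: "u \<in> set (tpath a b)" using tpath_split_sets(4)[OF av bv wab(1)] a by blast
    have "(a, b) \<in> pairs_through Y u \<inter> pairs_through Y w"
      using a b wab uab unfolding pairs_through_def by auto
    then have "(a, b) \<in> pairs_through Y z" using sub by blast
    then show False using wab unfolding pairs_through_def by auto
  qed
qed

lemma restr_path_join: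
  assumes uw: "u \<in> verts T" "w \<in> verts T" and z: "z \<in> set (tpath u w)" "z \<in> restr_vs Y"
    and p1: "is_path (restr T Y) u z p1" "set p1 = restr_vs Y \<inter> set (tpath u z)"
    and p2: "is_path (restr T Y) z w p2" "set p2 = restr_vs Y \<inter> set (tpath z w)"
  shows "is_path (restr T Y) u w (p1 @ tl p2)" "set (p1 @ tl p2) = restr_vs Y \<inter> set (tpath u w)"
proof -
  have zv: "z \<in> verts T" using z uw tpath_verts by blast
  have "set p1 \<inter> set p2 = {z}" using p1(2) p2(2) tpath_split_sets(2)[OF uw z(1)] z(2) by blast
  then show "is_path (restr T Y) u w (p1 @ tl p2)" using path_concat[OF p1(1) p2(1)] by blast
  obtain q where q: "p2 = z # q" using p2(1) by (cases p2) (auto simp: is_path_def)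
  have "set (p1 @ tl p2) = set p1 \<union> set p2" using q p1(2) tpath_props(8)[OF uw(1) zv] z(2) by auto
  then show "set (p1 @ tl p2) = restr_vs Y \<inter> set (tpath u w)"
    using p1(2) p2(2) tpath_split_sets(1)[OF uw z(1)] by blast
qed

text \<open>Induction on the number of vertices of \<open>T|Y\<close> on the path: either none lies strictly
  between \<open>u\<close> and \<open>w\<close>, and they are adjacent in \<open>T|Y\<close>, or we split the path at one that does.\<close>
lemma restr_path_exists:
  assumes "u \<in> restr_vs Y" "w \<in> restr_vs Y"
  shows "\<exists>p. is_path (restr T Y) u w p \<and> set p = restr_vs Y \<inter> set (tpath u w)"
  using assms
proof (induction "card (restr_vs Y \<inter> set (tpath u w))" arbitrary: u w rule: less_induct)
  case less
  have u: "u \<in> restr_vs Y" and w: "w \<in> restr_vs Y" using less.prems by auto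
  have uv: "u \<in> verts T" and wv: "w \<in> verts T" using u w restr_vs_span_vs span_vs_verts by blast+
  have Kv: "verts (restr T Y) = restr_vs Y" using restr_verts .
  show ?case
  proof (cases "\<forall>z\<in>restr_vs Y. z \<in> set (tpath u w) \<longrightarrow> z = u \<or> z = w")
    case True
    have "is_path (restr T Y) u w (if u = w then [u] else [u, w])"
    proof (cases "u = w")
      case False
      then have "{u, w} \<in> edges (restr T Y)"
        using True restr_edges_iff[OF u w] unfolding restr_adj_def by blast
      then show ?thesis using u w Kv False by (simp add: is_path_def is_walk_Cons2)
    qed (use u Kv in \<open>simp add: is_path_def\<close>)
    moreover have "set (if u = w then [u] else [u, w]) = restr_vs Y \<inter> set (tpath u w)"
      using True u w tpath_props(7,8)[OF uv wv] tpath_refl[OF uv] by auto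
    ultimately show ?thesis by blast
  next
    case False
    then obtain z where z: "z \<in> restr_vs Y" "z \<in> set (tpath u w)" "z \<noteq> u" "z \<noteq> w"
      by blast
    have zv: "z \<in> verts T" using z tpath_verts uv wv by blast
    have fin: "finite (restr_vs Y \<inter> set (tpath u w))" by simp
    have "w \<notin> set (tpath u z)"
      using tpath_split_sets(2)[OF uv wv z(2)] tpath_props(8)[OF zv wv] z(4) by (metis IntI singletonD)
    then have "restr_vs Y \<inter> set (tpath u z) \<subset> restr_vs Y \<inter> set (tpath u w)"
      using tpath_split_sets(4)[OF uv wv z(2)] w tpath_props(8)[OF uv wv] by blast
    then obtain p1 where p1: "is_path (restr T Y) u z p1" "set p1 = restr_vs Y \<inter> set (tpath u z)"
      using less.hyps[OF psubset_card_mono[OF fin] u z(1)] by blast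
    have "u \<notin> set (tpath z w)"
      using tpath_split_sets(2)[OF uv wv z(2)] tpath_props(7)[OF uv zv] z(3) by (metis IntI singletonD)
    then have "restr_vs Y \<inter> set (tpath z w) \<subset> restr_vs Y \<inter> set (tpath u w)"
      using tpath_split_sets(5)[OF uv wv z(2)] u tpath_props(7)[OF uv wv] by blast
    then obtain p2 where p2: "is_path (restr T Y) z w p2" "set p2 = restr_vs Y \<inter> set (tpath z w)"
      using less.hyps[OF psubset_card_mono[OF fin] z(1) w] by blast
    show ?thesis using restr_path_join[OF uv wv z(2,1) p1 p2] by blast
  qed
qed

lemma restr_walk_covers: "is_walk (restr T Y) p \<Longrightarrow> restr_vs Y \<inter> set (tpath (hd p) (last p)) \<subseteq> set p"
proof (induction p)
  case Nil then show ?case by simp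
next
  case (Cons x p)
  have Kv: "verts (restr T Y) = restr_vs Y" using restr_verts .
  have xK: "x \<in> restr_vs Y" using Cons.prems Kv by (auto simp: is_walk_def)
  have xv: "x \<in> verts T" using xK restr_vs_span_vs span_vs_verts by blast
  show ?case
  proof (cases p)
    case Nil then show ?thesis using tpath_refl[OF xv] by simp
  next
    case (Cons y r)
    have e: "{x, y} \<in> edges (restr T Y)" and wr: "is_walk (restr T Y) (y # r)"
      using Cons.prems Cons by (auto simp: is_walk_Cons2)
    have yK: "y \<in> restr_vs Y" using wr Kv by (auto simp: is_walk_def)
    have yv: "y \<in> verts T" using yK restr_vs_span_vs span_vs_verts by blast
    have lK: "last (y # r) \<in> restr_vs Y" using wr Kv by (auto simp: is_walk_def)
    have lv: "last (y # r) \<in> verts T" using lK restr_vs_span_vs span_vs_verts by blast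
    have IH: "restr_vs Y \<inter> set (tpath y (last (y # r))) \<subseteq> set (y # r)"
      using Cons.IH wr Cons by simp
    have "restr_adj x y" using restr_edges_iff[OF xK yK] e by blast
    then have A: "restr_vs Y \<inter> set (tpath x y) \<subseteq> {x, y}" unfolding restr_adj_def by blast
    have "set (tpath x (last (y # r))) \<subseteq> set (tpath x y) \<union> set (tpath y (last (y # r)))"
      using tpath_triangle(1)[OF xv yv lv] .
    then show ?thesis using A IH Cons by auto
  qed
qed

lemma on_tpath_iff_separates:
  assumes v: "v \<in> restr_vs Y" and a: "a \<in> Y" and b: "b \<in> Y"
  shows "v \<in> set (tpath a b) \<longleftrightarrow> separates (restr T Y) v a b"
  unfolding separates_def
proof
  assume vin: "v \<in> set (tpath a b)"
  show "\<forall>p. is_path (restr T Y) a b p \<longrightarrow> v \<in> set p"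
  proof (intro allI impI)
    fix p assume "is_path (restr T Y) a b p"
    then show "v \<in> set p" using restr_walk_covers[of p] vin v by (auto simp: is_path_def)
  qed
next
  assume h: "\<forall>p. is_path (restr T Y) a b p \<longrightarrow> v \<in> set p"
  have "a \<in> restr_vs Y" "b \<in> restr_vs Y" using a b restr_vs_def by auto
  then obtain p where "is_path (restr T Y) a b p" "set p = restr_vs Y \<inter> set (tpath a b)"
    using restr_path_exists by blast
  then show "v \<in> set (tpath a b)" using h by blast
qed

lemma median_in_restr_vs:
  assumes a: "a \<in> Y" and b: "b \<in> Y" and c: "c \<in> Y"
    and m: "m \<in> set (tpath a b)" "m \<in> set (tpath b c)" "m \<in> set (tpath a c)"
  shows "m \<in> restr_vs Y"
proof -
  have av: "a \<in> verts T" and bv: "b \<in> verts T" and cv: "c \<in> verts T" using a b c Y_verts by auto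
  show ?thesis
  proof (cases "a = b \<or> b = c \<or> a = c")
    case True
    then have "m = a \<or> m = b" using m tpath_refl av bv cv by auto
    then show ?thesis using a b restr_vs_def by auto
  next
    case False
    then have "m \<in> medians Y" unfolding medians_def using a b c m by blast
    then show ?thesis using restr_vs_def by auto
  qed
qed

lemma tpaths_disjoint_iff:
  assumes a: "a \<in> Y" and b: "b \<in> Y" and c: "c \<in> Y" and d: "d \<in> Y"
  shows "set (tpath a b) \<inter> set (tpath c d) = {} \<longleftrightarrow> \<not> (\<exists>v\<in>restr_vs Y. v \<in> set (tpath a b) \<and> v \<in> set (tpath c d))"
proof
  assume "set (tpath a b) \<inter> set (tpath c d) = {}"
  then show "\<not> (\<exists>v\<in>restr_vs Y. v \<in> set (tpath a b) \<and> v \<in> set (tpath c d))"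
    by blast
next
  assume h: "\<not> (\<exists>v\<in>restr_vs Y. v \<in> set (tpath a b) \<and> v \<in> set (tpath c d))"
  show "set (tpath a b) \<inter> set (tpath c d) = {}"
  proof (rule ccontr)
    assume "set (tpath a b) \<inter> set (tpath c d) \<noteq> {}"
    then obtain x where x: "x \<in> set (tpath a b)" "x \<in> set (tpath c d)" by blast
    have av: "a \<in> verts T" and bv: "b \<in> verts T" and cv: "c \<in> verts T" and dv: "d \<in> verts T"
      using a b c d Y_verts by auto
    obtain m where m: "m \<in> set (tpath a b)" "m \<in> set (tpath b c)" "m \<in> set (tpath a c)"
      using median_exists[OF av bv cv] by blast
    have "m \<in> set (tpath c d)" using median_gate[OF av bv cv dv m x] .
    moreover have "m \<in> restr_vs Y" using median_in_restr_vs[OF a b c m] .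
    ultimately show False using h m by blast
  qed
qed

lemma Y_restr_vs: "Y \<subseteq> restr_vs Y" unfolding restr_vs_def by blast

lemma restr_eq_self:
  assumes KV: "restr_vs Y = verts T"
  shows "restr T Y = T"
proof -
  have V: "verts (restr T Y) = verts T" using restr_verts KV by simp
  have E: "edges (restr T Y) = edges T"
  proof
    show "edges (restr T Y) \<subseteq> edges T"
    proof
      fix e assume e: "e \<in> edges (restr T Y)"
      then obtain x y where xy: "e = {x, y}" "x \<in> restr_vs Y" "y \<in> restr_vs Y"
        unfolding restr_eq edges_def by auto
      have "restr_adj x y" using restr_edges_iff[OF xy(2,3)] e xy(1) by simp
      then have ne: "x \<noteq> y" and sub: "\<forall>z\<in>restr_vs Y. z \<in> set (tpath x y) \<longrightarrow> z = x \<or> z = y"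
        unfolding restr_adj_def by auto
      have xv: "x \<in> verts T" and yv: "y \<in> verts T" using xy KV by auto
      have n: "tpath x y = x # tpath (towards x y) y" "{x, towards x y} \<in> edges T" "towards x y \<in> set (tpath x y)"
        using towards_props[OF xv yv ne] by auto
      have "towards x y \<in> verts T" using towards_props(3)[OF xv yv ne] .
      then have "towards x y = x \<or> towards x y = y" using sub KV n(3) by blast
      moreover have "towards x y \<noteq> x" using not_sym[OF conjunct1[OF edge_ends[OF n(2)]]] .
      ultimately have "towards x y = y" by blast
      then show "e \<in> edges T" using n(2) xy(1) by simp
    qed
    show "edges T \<subseteq> edges (restr T Y)"
    proof
      fix e assume e: "e \<in> edges T"
      then obtain x y where xy: "e = {x, y}" using edges_doubleton by blast
      have p: "x \<noteq> y" "x \<in> verts T" "y \<in> verts T" using edge_ends e xy by auto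
      have "tpath x y = [x, y]" using tpath_edge e xy by simp
      then have "restr_adj x y" unfolding restr_adj_def using p by auto
      then show "e \<in> edges (restr T Y)" using restr_edges_iff p KV xy by simp
    qed
  qed
  show ?thesis using V E by (metis edges_def prod.collapse verts_def)
qed

end
end

section \<open>Quartets determine restrictions\<close>

text \<open>For distinct leaves this says that \<open>T|{a, b, c, d}\<close> is \<open>ab|cd\<close>
  (\<open>is_split_iff_quartet_split\<close>).\<close>
definition quartet_split :: "'v graph \<Rightarrow> 'v \<Rightarrow> 'v \<Rightarrow> 'v \<Rightarrow> 'v \<Rightarrow> bool" where
  "quartet_split T a b c d \<longleftrightarrow> set (tree.tpath T a b) \<inter> set (tree.tpath T c d) = {}"

definition quartets_agree :: "'v graph \<Rightarrow> 'v graph \<Rightarrow> 'v set \<Rightarrow> bool" where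
  "quartets_agree T T' Y \<longleftrightarrow>
     (\<forall>a\<in>Y. \<forall>b\<in>Y. \<forall>c\<in>Y. \<forall>d\<in>Y. quartet_split T a b c d \<longleftrightarrow> quartet_split T' a b c d)"

lemma quartets_agreeD:
  "quartets_agree T T' Y \<Longrightarrow> a \<in> Y \<Longrightarrow> b \<in> Y \<Longrightarrow> c \<in> Y \<Longrightarrow> d \<in> Y \<Longrightarrow>
    quartet_split T a b c d \<longleftrightarrow> quartet_split T' a b c d"
  unfolding quartets_agree_def by blast

lemma quartets_agree_subset: "quartets_agree T T' Z \<Longrightarrow> Y \<subseteq> Z \<Longrightarrow> quartets_agree T T' Y"
  unfolding quartets_agree_def by (meson subsetD)

lemma quartets_agree_via:
  assumes "quartets_agree T T' Y" "quartets_agree T T'' Y"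
  shows "quartets_agree T' T'' Y"
  unfolding quartets_agree_def
proof (intro ballI)
  fix a b c d assume "a \<in> Y" "b \<in> Y" "c \<in> Y" "d \<in> Y"
  then show "quartet_split T' a b c d \<longleftrightarrow> quartet_split T'' a b c d"
    using quartets_agreeD[OF assms(1)] quartets_agreeD[OF assms(2)] by blast
qed

context tree begin

lemma quartet_split_at_most_one:
  assumes a: "a \<in> verts T" and b: "b \<in> verts T" and c: "c \<in> verts T" and d: "d \<in> verts T"
    and q1: "quartet_split T a b c d" and q2: "quartet_split T a c b d"
  shows False
proof -
  obtain m where m: "m \<in> set (tpath a b)" "m \<in> set (tpath b c)" "m \<in> set (tpath a c)"
    using median_exists[OF a b c] by blast
  have "m \<notin> set (tpath c d)" using q1 m(1) unfolding quartet_split_def by blast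
  moreover have "m \<notin> set (tpath b d)" using q2 m(3) unfolding quartet_split_def by blast
  moreover have "set (tpath b c) \<subseteq> set (tpath b d) \<union> set (tpath d c)"
    using tpath_triangle(1)[OF b d c] .
  ultimately show False using m(2) set_tpath_commute[OF c d] by blast
qed

end

lemma iso_restr_preserves_meeting:
  assumes T1: "phylo T X" and T2: "phylo T' X'" and Y: "Y \<subseteq> X" "Y \<subseteq> X'"
    and iso: "iso_fixing Y (restr T Y) (restr T' Y)"
    and abcd: "a \<in> Y" "b \<in> Y" "c \<in> Y" "d \<in> Y"
    and meet: "\<not> quartet_split T a b c d"
  shows "\<not> quartet_split T' a b c d"
proof -
  interpret A: phylo T X by (rule T1)
  interpret B: phylo T' X' by (rule T2)
  obtain v where v: "v \<in> A.restr_vs Y" "v \<in> set (A.tpath a b)" "v \<in> set (A.tpath c d)"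
    using A.tpaths_disjoint_iff[OF Y(1) abcd] meet unfolding quartet_split_def by blast
  obtain f where f: "graph_iso f (restr T Y) (restr T' Y)" "\<forall>y\<in>Y. f y = y"
    using iso unfolding iso_fixing_iff by blast
  have YG: "Y \<subseteq> verts (restr T Y)" using A.restr_verts[OF Y(1)] A.Y_restr_vs[OF Y(1)] by simp
  have "bij_betw f (A.restr_vs Y) (B.restr_vs Y)"
    using f(1) A.restr_verts[OF Y(1)] B.restr_verts[OF Y(2)] unfolding graph_iso_def by simp
  then have fv: "f v \<in> B.restr_vs Y" using v(1) by (rule bij_betw_apply)
  have "f v \<in> set (B.tpath x y)" if "x \<in> Y" "y \<in> Y" "v \<in> set (A.tpath x y)" for x y
    using graph_iso_separates[OF f(1)] A.on_tpath_iff_separates[OF Y(1) v(1) that(1,2)]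
      B.on_tpath_iff_separates[OF Y(2) fv that(1,2)] that f(2) YG by blast
  then show ?thesis using v abcd unfolding quartet_split_def by blast
qed

definition same_side :: "'v graph \<Rightarrow> 'v \<Rightarrow> 'v \<Rightarrow> 'v \<Rightarrow> 'v \<Rightarrow> bool" where
  "same_side T z r s t \<longleftrightarrow> z = r \<or> quartet_split T z r s t"

text \<open>At a median of \<open>a\<close>, \<open>b\<close>, \<open>c\<close>, the leaves \<open>x\<close> and \<open>y\<close> go off in the same direction.  Being
  phrased through quartet splits only, this transfers between trees whose quartets agree.\<close>
definition same_branch :: "'v graph \<Rightarrow> 'v \<Rightarrow> 'v \<Rightarrow> 'v \<Rightarrow> 'v \<Rightarrow> 'v \<Rightarrow> bool" where
  "same_branch T a b c x y \<longleftrightarrow> (same_side T x a b c \<and> same_side T y a b c) \<or> (same_side T x b a c \<and> same_side T y b a c)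
      \<or> (same_side T x c a b \<and> same_side T y c a b)"

context phylo begin
context fixes Y assumes Y: "Y \<subseteq> X"
begin

lemma same_side_iff_towards:
  assumes vM: "v \<in> span_vs Y" "v \<notin> Y" and r: "r \<in> Y" and s: "s \<in> Y" and t: "t \<in> Y" and z: "z \<in> Y"
    and v: "v \<in> set (tpath r s)" "v \<in> set (tpath r t)" "v \<in> set (tpath s t)"
  shows "same_side T z r s t \<longleftrightarrow> towards v z = towards v r"
proof -
  have vv: "v \<in> verts T" using vM span_vs_verts[OF Y] by blast
  have rv: "r \<in> verts T" and sv: "s \<in> verts T" and tv: "t \<in> verts T" and zv: "z \<in> verts T"
    using r s t z Y_verts[OF Y] by auto
  have zn: "z \<noteq> v" and rn: "r \<noteq> v" using z r vM by auto
  show ?thesis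
  proof
    assume "same_side T z r s t"
    then have "z = r \<or> set (tpath z r) \<inter> set (tpath s t) = {}"
      unfolding same_side_def quartet_split_def .
    then show "towards v z = towards v r"
    proof
      assume "set (tpath z r) \<inter> set (tpath s t) = {}"
      then have "v \<notin> set (tpath z r)" using v(3) by blast
      then show ?thesis using on_tpath_iff_towards_differ[OF vv zv rv zn rn] by blast
    qed simp
  next
    assume eq: "towards v z = towards v r"
    show "same_side T z r s t"
    proof (cases "z = r")
      case False
      have "v \<notin> set (tpath z r)" using on_tpath_iff_towards_differ[OF vv zv rv zn rn] eq by blast
      then have "v \<notin> set (tpath r z)" using set_tpath_commute[OF zv rv] by simp
      then have "set (tpath z r) \<inter> set (tpath s t) = {}"
        using median_branch_disjoint[OF rv sv tv zv v(1,2,3)] by blast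
      then show ?thesis unfolding same_side_def quartet_split_def by blast
    qed (simp add: same_side_def)
  qed
qed

lemma towards_image_at_median:
  assumes abc: "a \<in> Y" "b \<in> Y" "c \<in> Y" and v: "v \<in> span_vs Y" "v \<notin> Y"
    and d: "towards v a \<noteq> towards v b" "towards v b \<noteq> towards v c" "towards v a \<noteq> towards v c"
  shows "towards v ` Y = {towards v a, towards v b, towards v c}"
proof -
  have fin: "finite (towards v ` Y)" using towards_span_neighbours(2)[OF Y v] .
  have sub: "{towards v a, towards v b, towards v c} \<subseteq> towards v ` Y" using abc by blast
  have "card {towards v a, towards v b, towards v c} = 3" using d by simp
  moreover have "card (towards v ` Y) \<le> 3" using card_towards_le_3[OF Y v] .
  ultimately show ?thesis using card_subset_eq[OF fin sub] card_mono[OF fin sub] by simp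
qed

lemma on_tpath_iff_not_same_branch:
  assumes abc: "a \<in> Y" "b \<in> Y" "c \<in> Y" "a \<noteq> b" "b \<noteq> c" "a \<noteq> c"
    and v: "v \<in> set (tpath a b)" "v \<in> set (tpath b c)" "v \<in> set (tpath a c)"
    and x: "x \<in> Y" and y: "y \<in> Y"
  shows "v \<in> set (tpath x y) \<longleftrightarrow> \<not> same_branch T a b c x y"
proof -
  have vM: "v \<in> medians Y" unfolding medians_def using abc v by blast
  have vY: "v \<notin> Y" using vM medians_disjoint[OF Y] by blast
  have vV: "v \<in> span_vs Y" using vM medians_span_vs[OF Y] by blast
  have vv: "v \<in> verts T" using vV span_vs_verts[OF Y] by blast
  have abcv: "a \<in> verts T" "b \<in> verts T" "c \<in> verts T" "x \<in> verts T" "y \<in> verts T"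
    using abc x y Y_verts[OF Y] by auto
  have ne: "a \<noteq> v" "b \<noteq> v" "c \<noteq> v" "x \<noteq> v" "y \<noteq> v" using abc x y vY by auto
  have vba: "v \<in> set (tpath b a)" using v set_tpath_commute[OF abcv(1,2)] by simp
  have vcb: "v \<in> set (tpath c b)" using v set_tpath_commute[OF abcv(2,3)] by simp
  have vca: "v \<in> set (tpath c a)" using v set_tpath_commute[OF abcv(1,3)] by simp
  have "towards v a \<noteq> towards v b" "towards v b \<noteq> towards v c" "towards v a \<noteq> towards v c"
    using on_tpath_iff_towards_differ[OF vv] abcv ne v by blast+
  then have eq3: "towards v ` Y = {towards v a, towards v b, towards v c}"
    using towards_image_at_median[OF abc(1-3) vV vY] by blast
  have nxx: "towards v x \<in> {towards v a, towards v b, towards v c}" using eq3 x by blast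
  have nxy: "towards v y \<in> {towards v a, towards v b, towards v c}" using eq3 y by blast
  have sa: "\<And>z. z \<in> Y \<Longrightarrow> same_side T z a b c \<longleftrightarrow> towards v z = towards v a"
    using same_side_iff_towards[OF vV vY abc(1,2,3) _ v(1) v(3) v(2)] by blast
  have sb: "\<And>z. z \<in> Y \<Longrightarrow> same_side T z b a c \<longleftrightarrow> towards v z = towards v b"
    using same_side_iff_towards[OF vV vY abc(2,1,3) _ vba v(2) v(3)] by blast
  have sc: "\<And>z. z \<in> Y \<Longrightarrow> same_side T z c a b \<longleftrightarrow> towards v z = towards v c"
    using same_side_iff_towards[OF vV vY abc(3,1,2) _ vca vcb v(1)] by blast
  have "same_branch T a b c x y \<longleftrightarrow> towards v x = towards v y"
    unfolding same_branch_def using sa[OF x] sa[OF y] sb[OF x] sb[OF y] sc[OF x] sc[OF y] nxx nxy by auto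
  moreover have "v \<in> set (tpath x y) \<longleftrightarrow> towards v x \<noteq> towards v y"
    using on_tpath_iff_towards_differ[OF vv abcv(4,5) ne(4,5)] .
  ultimately show ?thesis by simp
qed

lemma pairs_through_leaf:
  assumes y: "y \<in> Y"
  shows "pairs_through Y y = {(a, b). a \<in> Y \<and> b \<in> Y \<and> (y = a \<or> y = b)}"
proof -
  have yX: "y \<in> X" using y Y by blast
  { fix a b assume ab: "a \<in> Y" "b \<in> Y"
    have av: "a \<in> verts T" and bv: "b \<in> verts T" using ab Y_verts[OF Y] by auto
    have "y \<in> set (tpath a b) \<longleftrightarrow> y = a \<or> y = b"
      using leaf_on_tpath[OF yX av bv] tpath_props(7,8)[OF av bv] by blast }
  then show ?thesis unfolding pairs_through_def by auto
qed

lemma restr_adj_iff_pairs_through: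
  assumes u: "u \<in> restr_vs Y" and w: "w \<in> restr_vs Y"
  shows "restr_adj Y u w \<longleftrightarrow> u \<noteq> w \<and>
    (\<forall>z\<in>restr_vs Y. pairs_through Y u \<inter> pairs_through Y w \<subseteq> pairs_through Y z \<longrightarrow> z = u \<or> z = w)"
proof -
  have "z \<in> set (tpath u w) \<longleftrightarrow> pairs_through Y u \<inter> pairs_through Y w \<subseteq> pairs_through Y z"
    if "z \<in> restr_vs Y" for z
    using on_tpath_iff_pairs_through[OF Y u w that] .
  then show ?thesis unfolding restr_adj_def[OF Y] by auto
qed

end
end

lemma pairs_through_match:
  assumes T1: "phylo T X" and T2: "phylo T' X'" and Y: "Y \<subseteq> X" "Y \<subseteq> X'"
    and QA: "quartets_agree T T' Y" and v: "v \<in> phylo.restr_vs T Y"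
  shows "\<exists>w\<in>phylo.restr_vs T' Y. phylo.pairs_through T' Y w = phylo.pairs_through T Y v"
proof -
  interpret A: phylo T X by (rule T1)
  interpret B: phylo T' X' by (rule T2)
  show ?thesis
  proof (cases "v \<in> Y")
    case True
    have "B.pairs_through Y v = A.pairs_through Y v"
      using A.pairs_through_leaf[OF Y(1) True] B.pairs_through_leaf[OF Y(2) True] by simp
    then show ?thesis using True B.Y_restr_vs[OF Y(2)] by blast
  next
    case False
    then have "v \<in> A.medians Y" using v A.restr_vs_def by blast
    then obtain a b c where abc: "a \<in> Y" "b \<in> Y" "c \<in> Y" "a \<noteq> b" "b \<noteq> c" "a \<noteq> c"
      "v \<in> set (A.tpath a b)" "v \<in> set (A.tpath b c)" "v \<in> set (A.tpath a c)"
        unfolding A.medians_def by blast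
    have abcv: "a \<in> verts T'" "b \<in> verts T'" "c \<in> verts T'" using abc B.Y_verts[OF Y(2)] by auto
    obtain w where w: "w \<in> set (B.tpath a b)" "w \<in> set (B.tpath b c)" "w \<in> set (B.tpath a c)"
      using B.median_exists[OF abcv] by blast
    have wM: "w \<in> B.medians Y" unfolding B.medians_def using abc w by blast
    then have wK: "w \<in> B.restr_vs Y" using B.restr_vs_def by blast
    have eqc: "\<And>x y. x \<in> Y \<Longrightarrow> y \<in> Y \<Longrightarrow> same_branch T a b c x y \<longleftrightarrow> same_branch T' a b c x y"
      unfolding same_branch_def same_side_def using quartets_agreeD[OF QA] abc(1-3) by simp
    have "\<And>x y. x \<in> Y \<Longrightarrow> y \<in> Y \<Longrightarrow> w \<in> set (B.tpath x y) \<longleftrightarrow> v \<in> set (A.tpath x y)"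
      using A.on_tpath_iff_not_same_branch[OF Y(1) abc(1-9)] B.on_tpath_iff_not_same_branch[OF Y(2) abc(1-6) w(1,2,3)] eqc by simp
    then have "B.pairs_through Y w = A.pairs_through Y v"
      unfolding A.pairs_through_def B.pairs_through_def by auto
    then show ?thesis using wK by blast
  qed
qed

lemma iso_restr_if_pairs_through_bij:
  assumes T1: "phylo T X" and T2: "phylo T' X'" and Y: "Y \<subseteq> X" "Y \<subseteq> X'"
    and bij: "bij_betw f (phylo.restr_vs T Y) (phylo.restr_vs T' Y)"
    and P: "\<And>v. v \<in> phylo.restr_vs T Y \<Longrightarrow> phylo.pairs_through T' Y (f v) = phylo.pairs_through T Y v"
  shows "iso_fixing Y (restr T Y) (restr T' Y)"
proof -
  interpret A: phylo T X by (rule T1)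
  interpret B: phylo T' X' by (rule T2)
  have fK: "f v \<in> B.restr_vs Y" if "v \<in> A.restr_vs Y" for v by (rule bij_betw_apply[OF bij that])
  have f_eq: "f u = f v \<longleftrightarrow> u = v" if "u \<in> A.restr_vs Y" "v \<in> A.restr_vs Y" for u v
    using bij that unfolding bij_betw_def inj_on_def by blast
  have "f y = y" if y: "y \<in> Y" for y
  proof -
    have yA: "y \<in> A.restr_vs Y" and yB: "y \<in> B.restr_vs Y"
      using y A.Y_restr_vs[OF Y(1)] B.Y_restr_vs[OF Y(2)] by auto
    have "B.pairs_through Y (f y) = B.pairs_through Y y"
      using P[OF yA] A.pairs_through_leaf[OF Y(1) y] B.pairs_through_leaf[OF Y(2) y] by simp
    then show "f y = y" using B.pairs_through_inj[OF Y(2) fK[OF yA] yB] by simp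
  qed
  moreover have "{u, v} \<in> edges (restr T Y) \<longleftrightarrow> {f u, f v} \<in> edges (restr T' Y)"
    if u: "u \<in> A.restr_vs Y" and v: "v \<in> A.restr_vs Y" for u v
  proof -
    have "(\<forall>z\<in>A.restr_vs Y. A.pairs_through Y u \<inter> A.pairs_through Y v \<subseteq> A.pairs_through Y z \<longrightarrow> z = u \<or> z = v)
      \<longleftrightarrow> (\<forall>z\<in>A.restr_vs Y. B.pairs_through Y (f u) \<inter> B.pairs_through Y (f v) \<subseteq> B.pairs_through Y (f z) \<longrightarrow>
            f z = f u \<or> f z = f v)"
      using P u v f_eq by (simp cong: ball_cong)
    also have "\<dots> \<longleftrightarrow> (\<forall>z\<in>B.restr_vs Y. B.pairs_through Y (f u) \<inter> B.pairs_through Y (f v) \<subseteq> B.pairs_through Y z \<longrightarrow>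
            z = f u \<or> z = f v)"
      by (subst bij_betw_imp_surj_on[OF bij, symmetric]) simp
    finally show ?thesis
      using A.restr_edges_iff[OF Y(1) u v] B.restr_edges_iff[OF Y(2) fK[OF u] fK[OF v]]
        A.restr_adj_iff_pairs_through[OF Y(1) u v] B.restr_adj_iff_pairs_through[OF Y(2) fK[OF u] fK[OF v]]
        f_eq[OF u v] by simp
  qed
  ultimately show ?thesis
    using bij A.restr_verts[OF Y(1)] B.restr_verts[OF Y(2)] unfolding iso_fixing_def by auto
qed

theorem iso_restr_if_quartets_agree:
  assumes T1: "phylo T X" and T2: "phylo T' X'" and Y: "Y \<subseteq> X" "Y \<subseteq> X'"
    and QA: "quartets_agree T T' Y"
  shows "iso_fixing Y (restr T Y) (restr T' Y)"
proof -
  interpret A: phylo T X by (rule T1)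
  interpret B: phylo T' X' by (rule T2)
  have QA': "quartets_agree T' T Y" using QA unfolding quartets_agree_def by simp
  define f where "f v = (SOME w. w \<in> B.restr_vs Y \<and> B.pairs_through Y w = A.pairs_through Y v)" for v
  have fK: "f v \<in> B.restr_vs Y \<and> B.pairs_through Y (f v) = A.pairs_through Y v" if v: "v \<in> A.restr_vs Y" for v
    unfolding f_def using pairs_through_match[OF T1 T2 Y QA v] by (rule someI2_bex)
  have "inj_on f (A.restr_vs Y)"
    using fK A.pairs_through_inj[OF Y(1)] by (metis inj_onI)
  moreover have "f ` A.restr_vs Y = B.restr_vs Y"
  proof
    show "f ` A.restr_vs Y \<subseteq> B.restr_vs Y" using fK by auto
    show "B.restr_vs Y \<subseteq> f ` A.restr_vs Y"
    proof
      fix w assume w: "w \<in> B.restr_vs Y"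
      obtain v where v: "v \<in> A.restr_vs Y" "A.pairs_through Y v = B.pairs_through Y w"
        using pairs_through_match[OF T2 T1 Y(2) Y(1) QA' w] by blast
      then have "f v = w" using B.pairs_through_inj[OF Y(2) _ w] fK[OF v(1)] by simp
      then show "w \<in> f ` A.restr_vs Y" using v(1) by blast
    qed
  qed
  ultimately show ?thesis
    using iso_restr_if_pairs_through_bij[OF T1 T2 Y] fK unfolding bij_betw_def by blast
qed

context phylo begin

lemma towards_internal_cases:
  assumes m: "m \<in> verts T" "m \<notin> X" and v: "a \<in> verts T" "b \<in> verts T" "c \<in> verts T" "d \<in> verts T"
    and ne: "a \<noteq> m" "b \<noteq> m" "c \<noteq> m" "d \<noteq> m"
    and d3: "towards m a \<noteq> towards m b" "towards m b \<noteq> towards m c" "towards m a \<noteq> towards m c"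
  shows "towards m d \<in> {towards m a, towards m b, towards m c}"
proof -
  have sub: "{towards m a, towards m b, towards m c} \<subseteq> {n. {m, n} \<in> edges T}"
    using towards_props(2)[OF m(1)] v ne by auto
  have "card {n. {m, n} \<in> edges T} = 3"
    using degree_eq_card_neighbours degree_internal[OF m] by simp
  moreover have "card {towards m a, towards m b, towards m c} = 3" using d3 by simp
  ultimately have "{towards m a, towards m b, towards m c} = {n. {m, n} \<in> edges T}"
    using card_subset_eq[OF finite_neighbours sub] by simp
  moreover have "towards m d \<in> {n. {m, n} \<in> edges T}" using towards_props(2)[OF m(1) v(4)] ne by auto
  ultimately show ?thesis by blast
qed

lemma quartet_split_at_least_one:
  assumes X: "a \<in> X" "b \<in> X" "c \<in> X" "d \<in> X" and dist: "distinct [a, b, c, d]"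
  shows "quartet_split T a b c d \<or> quartet_split T a c b d \<or> quartet_split T a d b c"
proof -
  have av: "a \<in> verts T" and bv: "b \<in> verts T" and cv: "c \<in> verts T" and dv: "d \<in> verts T"
    using X X_verts by auto
  obtain m where m: "m \<in> set (tpath a b)" "m \<in> set (tpath b c)" "m \<in> set (tpath a c)"
    using median_exists[OF av bv cv] by blast
  have mv: "m \<in> verts T" using m av bv tpath_verts by blast
  have mX: "m \<notin> X" using median_not_leaf[OF X(1-3) _ _ _ m] dist by simp
  have ne: "a \<noteq> m" "b \<noteq> m" "c \<noteq> m" "d \<noteq> m" using mX X by auto
  have "towards m a \<noteq> towards m b" "towards m b \<noteq> towards m c" "towards m a \<noteq> towards m c"
    using on_tpath_iff_towards_differ[OF mv] av bv cv ne m by blast+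
  then have "towards m d = towards m a \<or> towards m d = towards m b \<or> towards m d = towards m c"
    using towards_internal_cases[OF mv mX av bv cv dv ne] by blast
  then show ?thesis
  proof (elim disjE)
    assume "towards m d = towards m a"
    then have "m \<notin> set (tpath a d)" using on_tpath_iff_towards_differ[OF mv av dv ne(1) ne(4)] by simp
    then have "set (tpath d a) \<inter> set (tpath b c) = {}"
      using median_branch_disjoint[OF av bv cv dv m(1) m(3) m(2)] by blast
    then show ?thesis unfolding quartet_split_def using set_tpath_commute[OF av dv] by simp
  next
    assume "towards m d = towards m b"
    then have "m \<notin> set (tpath b d)" using on_tpath_iff_towards_differ[OF mv bv dv ne(2) ne(4)] by simp
    moreover have "m \<in> set (tpath b a)" using m(1) set_tpath_commute[OF av bv] by simp
    ultimately have "set (tpath d b) \<inter> set (tpath a c) = {}"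
      using median_branch_disjoint[OF bv av cv dv _ m(2) m(3)] by blast
    then show ?thesis unfolding quartet_split_def using set_tpath_commute[OF bv dv] by auto
  next
    assume "towards m d = towards m c"
    then have "m \<notin> set (tpath c d)" using on_tpath_iff_towards_differ[OF mv cv dv ne(3) ne(4)] by simp
    moreover have "m \<in> set (tpath c a)" "m \<in> set (tpath c b)"
      using m set_tpath_commute av bv cv by auto
    ultimately have "set (tpath d c) \<inter> set (tpath a b) = {}"
      using median_branch_disjoint[OF cv av bv dv _ _ m(1)] by blast
    then show ?thesis unfolding quartet_split_def using set_tpath_commute[OF cv dv] by auto
  qed
qed

lemma quartet_split_degenerate:
  assumes X: "a \<in> X" "b \<in> X" "c \<in> X" "d \<in> X" and nd: "\<not> distinct [a, b, c, d]"
  shows "quartet_split T a b c d \<longleftrightarrow> {a, b} \<inter> {c, d} = {}"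
proof -
  have av: "a \<in> verts T" and bv: "b \<in> verts T" and cv: "c \<in> verts T" and dv: "d \<in> verts T"
    using X X_verts by auto
  show ?thesis
  proof (cases "{a, b} \<inter> {c, d} = {}")
    case False
    then have "a \<in> set (tpath c d) \<or> b \<in> set (tpath c d)" using tpath_props(7,8)[OF cv dv] by auto
    then have "\<not> quartet_split T a b c d" unfolding quartet_split_def
      using tpath_props(7,8)[OF av bv] by blast
    then show ?thesis using False by simp
  next
    case True
    then have "a = b \<or> c = d" using nd by auto
    then show ?thesis
    proof
      assume ab: "a = b"
      have "a \<notin> set (tpath c d)" using leaf_on_tpath[OF X(1) cv dv] True by auto
      then show ?thesis unfolding quartet_split_def using ab tpath_refl[OF av] True by simp
    next
      assume cd: "c = d"
      have "c \<notin> set (tpath a b)" using leaf_on_tpath[OF X(3) av bv] True by auto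
      then show ?thesis unfolding quartet_split_def using cd tpath_refl[OF cv] True by simp
    qed
  qed
qed

lemma quartet_split_permute:
  assumes X: "a \<in> X" "b \<in> X" "c \<in> X" "d \<in> X" and dist: "distinct [a, b, c, d]"
    and q: "quartet_split T a b c d"
    and xyzw: "x \<in> {a, b, c, d}" "y \<in> {a, b, c, d}" "z \<in> {a, b, c, d}" "w \<in> {a, b, c, d}"
    and d2: "distinct [x, y, z, w]"
  shows "quartet_split T x y z w \<longleftrightarrow> ({x, y} = {a, b} \<or> {x, y} = {c, d})"
proof -
  have av: "a \<in> verts T" and bv: "b \<in> verts T" and cv: "c \<in> verts T" and dv: "d \<in> verts T"
    using X X_verts by auto
  have s: "set (tpath b a) = set (tpath a b)" "set (tpath c a) = set (tpath a c)" "set (tpath d a) = set (tpath a d)"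
    "set (tpath c b) = set (tpath b c)" "set (tpath d b) = set (tpath b d)" "set (tpath d c) = set (tpath c d)"
    using set_tpath_commute av bv cv dv by auto
  have k1: "set (tpath a b) \<inter> set (tpath c d) = {}" "set (tpath c d) \<inter> set (tpath a b) = {}"
    using q unfolding quartet_split_def by auto
  have k2: "set (tpath a c) \<inter> set (tpath b d) \<noteq> {}" "set (tpath b d) \<inter> set (tpath a c) \<noteq> {}"
    using quartet_split_at_most_one[OF av bv cv dv q] unfolding quartet_split_def by auto
  have q': "quartet_split T a b d c" using q unfolding quartet_split_def
    using set_tpath_commute[OF cv dv] by simp
  have k3: "set (tpath a d) \<inter> set (tpath b c) \<noteq> {}" "set (tpath b c) \<inter> set (tpath a d) \<noteq> {}"
    using quartet_split_at_most_one[OF av bv dv cv q'] set_tpath_commute[OF bv cv]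
      unfolding quartet_split_def by auto
  show ?thesis
    using xyzw d2 dist
    by (elim insertE emptyE) (simp_all add: quartet_split_def s k1 k2 k3 doubleton_eq_iff)
qed

end

lemma quartet_splits_agree:
  assumes T1: "phylo T X" and T2: "phylo T' X'" and Q: "{a, b, c, d} \<subseteq> X" "{a, b, c, d} \<subseteq> X'"
    and dist: "distinct [a, b, c, d]" and q1: "quartet_split T a b c d" and q2: "quartet_split T' a b c d"
  shows "quartets_agree T T' {a, b, c, d}"
  unfolding quartets_agree_def
proof (intro ballI)
  fix x y z w assume xyzw: "x \<in> {a, b, c, d}" "y \<in> {a, b, c, d}" "z \<in> {a, b, c, d}" "w \<in> {a, b, c, d}"
  interpret A: phylo T X by (rule T1)
  interpret B: phylo T' X' by (rule T2)
  have x1: "x \<in> X" "y \<in> X" "z \<in> X" "w \<in> X" and x2: "x \<in> X'" "y \<in> X'" "z \<in> X'" "w \<in> X'"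
    using xyzw Q by auto
  show "quartet_split T x y z w \<longleftrightarrow> quartet_split T' x y z w"
  proof (cases "distinct [x, y, z, w]")
    case True
    then show ?thesis
      using A.quartet_split_permute[OF _ _ _ _ dist q1 xyzw True] B.quartet_split_permute[OF _ _ _ _ dist q2 xyzw True] Q
      by simp
  next
    case False
    then show ?thesis
      using A.quartet_split_degenerate[OF x1 False] B.quartet_split_degenerate[OF x2 False] by simp
  qed
qed

lemma quartets_agree_if_distinct_agree:
  assumes T1: "phylo T X" and T2: "phylo T' X'" and Y: "Y \<subseteq> X" "Y \<subseteq> X'"
    and QD: "\<And>a b c d. a \<in> Y \<Longrightarrow> b \<in> Y \<Longrightarrow> c \<in> Y \<Longrightarrow> d \<in> Y \<Longrightarrow> distinct [a, b, c, d] \<Longrightarrow>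
        quartet_split T a b c d \<longleftrightarrow> quartet_split T' a b c d"
  shows "quartets_agree T T' Y"
  unfolding quartets_agree_def
proof (intro ballI)
  fix a b c d assume abcd: "a \<in> Y" "b \<in> Y" "c \<in> Y" "d \<in> Y"
  interpret A: phylo T X by (rule T1)
  interpret B: phylo T' X' by (rule T2)
  show "quartet_split T a b c d \<longleftrightarrow> quartet_split T' a b c d"
    using QD[OF abcd] A.quartet_split_degenerate[of a b c d] B.quartet_split_degenerate[of a b c d] abcd Y
    by (cases "distinct [a, b, c, d]") auto
qed

theorem iso_restr_iff_quartets_agree:
  assumes T1: "phylo T X" and T2: "phylo T' X'" and Y: "Y \<subseteq> X" "Y \<subseteq> X'"
  shows "iso_fixing Y (restr T Y) (restr T' Y) \<longleftrightarrow> quartets_agree T T' Y"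
proof
  assume iso: "iso_fixing Y (restr T Y) (restr T' Y)"
  interpret A: phylo T X by (rule T1)
  have "Y \<subseteq> verts (restr T Y)" using A.restr_verts[OF Y(1)] A.Y_restr_vs[OF Y(1)] by simp
  then have iso': "iso_fixing Y (restr T' Y) (restr T Y)" using iso_fixing_sym[OF iso] by blast
  show "quartets_agree T T' Y"
    unfolding quartets_agree_def
  proof (intro ballI)
    fix a b c d assume "a \<in> Y" "b \<in> Y" "c \<in> Y" "d \<in> Y"
    then show "quartet_split T a b c d \<longleftrightarrow> quartet_split T' a b c d"
      using iso_restr_preserves_meeting[OF T1 T2 Y iso, of a b c d]
        iso_restr_preserves_meeting[OF T2 T1 Y(2) Y(1) iso', of a b c d] by blast
  qed
next
  assume "quartets_agree T T' Y"
  then show "iso_fixing Y (restr T Y) (restr T' Y)"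
    using iso_restr_if_quartets_agree[OF T1 T2 Y] by blast
qed

section \<open>The quartet tree\<close>

definition quartet_tree :: "'v \<Rightarrow> 'v \<Rightarrow> 'v \<Rightarrow> 'v \<Rightarrow> 'v \<Rightarrow> 'v \<Rightarrow> 'v graph" where
  "quartet_tree a b c d u v = ({a, b, c, d, u, v}, {{a, u}, {b, u}, {c, v}, {d, v}, {u, v}})"

context
  fixes a b c d u v :: 'v
  assumes dist: "distinct [a, b, c, d, u, v]"
begin

lemma quartet_tree_verts: "verts (quartet_tree a b c d u v) = {a, b, c, d, u, v}"
  by (simp add: quartet_tree_def verts_def)
lemma quartet_tree_edges: "edges (quartet_tree a b c d u v) = {{a, u}, {b, u}, {c, v}, {d, v}, {u, v}}"
  by (simp add: quartet_tree_def edges_def)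

lemma quartet_tree_wf: "wf_graph (quartet_tree a b c d u v)"
  unfolding wf_graph_def quartet_tree_verts quartet_tree_edges using dist by auto

lemma quartet_tree_degree:
  "degree (quartet_tree a b c d u v) a = 1" "degree (quartet_tree a b c d u v) b = 1"
  "degree (quartet_tree a b c d u v) c = 1" "degree (quartet_tree a b c d u v) d = 1"
  "degree (quartet_tree a b c d u v) u = 3" "degree (quartet_tree a b c d u v) v = 3"
proof -
  have "{e \<in> {{a, u}, {b, u}, {c, v}, {d, v}, {u, v}}. a \<in> e} = {{a, u}}" using dist by auto
  then show "degree (quartet_tree a b c d u v) a = 1" unfolding degree_def quartet_tree_edges by simp
  have "{e \<in> {{a, u}, {b, u}, {c, v}, {d, v}, {u, v}}. b \<in> e} = {{b, u}}" using dist by auto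
  then show "degree (quartet_tree a b c d u v) b = 1" unfolding degree_def quartet_tree_edges by simp
  have "{e \<in> {{a, u}, {b, u}, {c, v}, {d, v}, {u, v}}. c \<in> e} = {{c, v}}" using dist by auto
  then show "degree (quartet_tree a b c d u v) c = 1" unfolding degree_def quartet_tree_edges by simp
  have "{e \<in> {{a, u}, {b, u}, {c, v}, {d, v}, {u, v}}. d \<in> e} = {{d, v}}" using dist by auto
  then show "degree (quartet_tree a b c d u v) d = 1" unfolding degree_def quartet_tree_edges by simp
  have "{e \<in> {{a, u}, {b, u}, {c, v}, {d, v}, {u, v}}. u \<in> e} = {{a, u}, {b, u}, {u, v}}"
    using dist by auto
  moreover have "card {{a, u}, {b, u}, {u, v}} = 3" using dist by (simp add: doubleton_eq_iff)
  ultimately show "degree (quartet_tree a b c d u v) u = 3" unfolding degree_def quartet_tree_edges by simp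
  have "{e \<in> {{a, u}, {b, u}, {c, v}, {d, v}, {u, v}}. v \<in> e} = {{c, v}, {d, v}, {u, v}}"
    using dist by auto
  moreover have "card {{c, v}, {d, v}, {u, v}} = 3" using dist by (simp add: doubleton_eq_iff)
  ultimately show "degree (quartet_tree a b c d u v) v = 3" unfolding degree_def quartet_tree_edges by simp
qed

lemma quartet_tree_connected: "connected_graph (quartet_tree a b c d u v)"
proof (rule connected_if_walks_to_hub[where hub = u], intro ballI)
  fix x assume "x \<in> verts (quartet_tree a b c d u v)"
  then have "x \<in> {a, b, c, d, u, v}" using quartet_tree_verts by simp
  then show "\<exists>p. is_walk (quartet_tree a b c d u v) p \<and> hd p = x \<and> last p = u"
  proof (elim insertE emptyE)
    assume "x = a" then show ?thesis
      by (intro exI[of _ "[a, u]"]) (simp add: is_walk_Cons2 quartet_tree_verts quartet_tree_edges)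
  next
    assume "x = b" then show ?thesis
      by (intro exI[of _ "[b, u]"]) (simp add: is_walk_Cons2 quartet_tree_verts quartet_tree_edges)
  next
    assume "x = c" then show ?thesis
      by (intro exI[of _ "[c, v, u]"]) (simp add: is_walk_Cons2 quartet_tree_verts quartet_tree_edges insert_commute)
  next
    assume "x = d" then show ?thesis
      by (intro exI[of _ "[d, v, u]"]) (simp add: is_walk_Cons2 quartet_tree_verts quartet_tree_edges insert_commute)
  next
    assume "x = u" then show ?thesis
      by (intro exI[of _ "[u]"]) (simp add: quartet_tree_verts)
  next
    assume "x = v" then show ?thesis
      by (intro exI[of _ "[v, u]"]) (simp add: is_walk_Cons2 quartet_tree_verts quartet_tree_edges insert_commute)
  qed
qed

lemma quartet_tree_acyclic: "acyclic_graph (quartet_tree a b c d u v)"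
  unfolding acyclic_graph_def
proof
  assume "\<exists>p. is_walk (quartet_tree a b c d u v) p \<and> distinct p \<and> 3 \<le> length p \<and> {last p, hd p} \<in> edges (quartet_tree a b c d u v)"
  then obtain p where p: "is_walk (quartet_tree a b c d u v) p" "distinct p" "3 \<le> length p"
    "{last p, hd p} \<in> edges (quartet_tree a b c d u v)" by blast
  have fin: "finite (edges (quartet_tree a b c d u v))" by (simp add: quartet_tree_edges)
  have "\<And>x. x \<in> set p \<Longrightarrow> degree (quartet_tree a b c d u v) x \<ge> 2"
    using degree_ge_2_on_cycle[OF fin p] by blast
  then have "a \<notin> set p" "b \<notin> set p" "c \<notin> set p" "d \<notin> set p"
    using quartet_tree_degree by force+
  moreover have "set p \<subseteq> {a, b, c, d, u, v}"
    using p(1) quartet_tree_verts by (simp add: is_walk_def)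
  ultimately have "set p \<subseteq> {u, v}" by blast
  then have "card (set p) \<le> card {u, v}" by (intro card_mono) auto
  moreover have "card {u, v} \<le> 2" by (cases "u = v") auto
  ultimately have "card (set p) \<le> 2" by linarith
  then show False using p(2,3) distinct_card by fastforce
qed

lemma quartet_tree_phylo: "phylo (quartet_tree a b c d u v) {a, b, c, d}"
proof -
  have tr: "is_tree (quartet_tree a b c d u v)"
    using quartet_tree_wf quartet_tree_connected quartet_tree_acyclic by (simp add: is_tree_def)
  have "phylo_tree {a, b, c, d} (quartet_tree a b c d u v)"
    unfolding phylo_tree_def using tr quartet_tree_degree dist by (auto simp: quartet_tree_verts)
  then show ?thesis using tr by (simp add: phylo_def phylo_axioms_def tree_def)
qed

end

context
  fixes a b c d u v :: 'v
  assumes dist: "distinct [a, b, c, d, u, v]"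
begin

interpretation G: phylo "quartet_tree a b c d u v" "{a, b, c, d}" by (rule quartet_tree_phylo[OF dist])

lemma quartet_tree_tpaths:
  "G.tpath a b = [a, u, b]" "G.tpath b c = [b, u, v, c]" "G.tpath a c = [a, u, v, c]"
  "G.tpath c d = [c, v, d]" "G.tpath a d = [a, u, v, d]"
  using dist
  by (auto intro!: G.tpath_eqI
      simp: is_path_def is_walk_Cons2 quartet_tree_verts[OF dist] quartet_tree_edges[OF dist] insert_commute)

lemma quartet_tree_restr: "restr (quartet_tree a b c d u v) {a, b, c, d} = quartet_tree a b c d u v"
proof (rule G.restr_eq_self)
  show "{a, b, c, d} \<subseteq> {a, b, c, d}" by simp
  have "a \<noteq> b \<and> b \<noteq> c \<and> a \<noteq> c \<and> u \<in> set (G.tpath a b) \<and> u \<in> set (G.tpath b c) \<and> u \<in> set (G.tpath a c)"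
    using dist quartet_tree_tpaths by simp
  then have "u \<in> G.medians {a, b, c, d}" unfolding G.medians_def by blast
  moreover have "a \<noteq> c \<and> c \<noteq> d \<and> a \<noteq> d \<and> v \<in> set (G.tpath a c) \<and> v \<in> set (G.tpath c d) \<and> v \<in> set (G.tpath a d)"
    using dist quartet_tree_tpaths by simp
  then have "v \<in> G.medians {a, b, c, d}" unfolding G.medians_def by blast
  moreover have "G.medians {a, b, c, d} \<subseteq> verts (quartet_tree a b c d u v)"
    using G.medians_span_vs G.span_vs_verts by blast
  ultimately show "G.restr_vs {a, b, c, d} = verts (quartet_tree a b c d u v)"
    unfolding G.restr_vs_def quartet_tree_verts[OF dist] by auto
qed

lemma quartet_tree_split: "quartet_split (quartet_tree a b c d u v) a b c d"
  unfolding quartet_split_def using quartet_tree_tpaths dist by auto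

end

lemma iso_quartet_tree_iff:
  assumes T: "phylo T X" and X: "{a, b, c, d} \<subseteq> X" and dist: "distinct [a, b, c, d, u, v]"
  shows "iso_fixing {a, b, c, d} (restr T {a, b, c, d}) (quartet_tree a b c d u v) \<longleftrightarrow>
    quartet_split T a b c d"
proof -
  have G: "phylo (quartet_tree a b c d u v) {a, b, c, d}" using quartet_tree_phylo[OF dist] .
  have "iso_fixing {a, b, c, d} (restr T {a, b, c, d}) (quartet_tree a b c d u v) \<longleftrightarrow>
      quartets_agree T (quartet_tree a b c d u v) {a, b, c, d}"
    using iso_restr_iff_quartets_agree[OF T G X subset_refl] quartet_tree_restr[OF dist] by simp
  also have "\<dots> \<longleftrightarrow> quartet_split T a b c d"
  proof
    assume "quartets_agree T (quartet_tree a b c d u v) {a, b, c, d}"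
    then show "quartet_split T a b c d" using quartet_tree_split[OF dist] quartets_agreeD by fastforce
  next
    assume "quartet_split T a b c d"
    moreover have "distinct [a, b, c, d]" using dist by simp
    ultimately show "quartets_agree T (quartet_tree a b c d u v) {a, b, c, d}"
      using quartet_splits_agree[OF T G X subset_refl _ _ quartet_tree_split[OF dist]] by blast
  qed
  finally show ?thesis .
qed

lemma is_split_iff_quartet_split:
  assumes T: "phylo T X" and X: "{a, b, c, d} \<subseteq> X" and dist: "distinct [a, b, c, d]"
  shows "is_split (restr T {a, b, c, d}) a b c d \<longleftrightarrow> quartet_split T a b c d"
proof
  assume "is_split (restr T {a, b, c, d}) a b c d"
  then obtain u v where "distinct [a, b, c, d, u, v]"
    "iso_fixing {a, b, c, d} (restr T {a, b, c, d}) (quartet_tree a b c d u v)"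
    unfolding is_split_def quartet_tree_def by blast
  then show "quartet_split T a b c d" using iso_quartet_tree_iff[OF T X] by blast
next
  interpret phylo T X by (rule T)
  assume q: "quartet_split T a b c d"
  have v: "a \<in> verts T" "b \<in> verts T" "c \<in> verts T" "d \<in> verts T" using X X_verts by auto
  obtain m1 where m1: "m1 \<in> set (tpath a b)" "m1 \<in> set (tpath b c)" "m1 \<in> set (tpath a c)"
    using median_exists[OF v(1-3)] by blast
  obtain m2 where m2: "m2 \<in> set (tpath c d)" "m2 \<in> set (tpath d a)" "m2 \<in> set (tpath c a)"
    using median_exists[OF v(3,4,1)] by blast
  have "m1 \<noteq> m2" using q m1(1) m2(1) unfolding quartet_split_def by blast
  moreover have "m1 \<notin> X" "m2 \<notin> X"
    using median_not_leaf[OF _ _ _ _ _ _ m1] median_not_leaf[OF _ _ _ _ _ _ m2] X dist by auto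
  ultimately have dist6: "distinct [a, b, c, d, m1, m2]" using dist X by auto
  then have "iso_fixing {a, b, c, d} (restr T {a, b, c, d}) (quartet_tree a b c d m1 m2)"
    using iso_quartet_tree_iff[OF T X] q by blast
  then show "is_split (restr T {a, b, c, d}) a b c d" unfolding is_split_def quartet_tree_def
    using dist6 by blast
qed

section \<open>Agreement forests and the integer program\<close>

context phylo begin

lemma edges_span_pair:
  assumes "a \<in> X" "b \<in> X"
  shows "edges (span T {a, b}) = list_edges (tpath a b)"
proof -
  have v: "a \<in> verts T" "b \<in> verts T" using assms X_verts by auto
  have "edges (span T {a, b}) = span_es {a, b}" using span_eq assms by (simp add: edges_def)
  also have "\<dots> = list_edges (tpath a b)"
    unfolding span_es_def using tpath_refl[OF v(1)] tpath_refl[OF v(2)] list_edges_tpath_commute[OF v] by auto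
  finally show ?thesis .
qed

lemma quartet_split_exists:
  assumes "{a, b, c, d} \<subseteq> X" "distinct [a, b, c, d]"
  obtains x y z w
  where "{x, y, z, w} = {a, b, c, d}" "distinct [x, y, z, w]" "quartet_split T x y z w"
proof -
  have "quartet_split T a b c d \<or> quartet_split T a c b d \<or> quartet_split T a d b c"
    using quartet_split_at_least_one assms by simp
  moreover have "{a, c, b, d} = {a, b, c, d}" "{a, d, b, c} = {a, b, c, d}" by auto
  moreover have "distinct [a, c, b, d]" "distinct [a, d, b, c]" using assms(2) by auto
  ultimately show ?thesis using that assms(2) by blast
qed

lemma verts_span_disjoint_iff:
  assumes "Y \<subseteq> X" "Z \<subseteq> X"
  shows "verts (span T Y) \<inter> verts (span T Z) = {} \<longleftrightarrow>
    (\<forall>a\<in>Y. \<forall>b\<in>Y. \<forall>c\<in>Z. \<forall>d\<in>Z. quartet_split T a b c d)"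
proof -
  have "verts (span T Y) = span_vs Y" "verts (span T Z) = span_vs Z"
    using span_eq assms by (simp_all add: verts_def)
  then show ?thesis unfolding span_vs_def quartet_split_def by blast
qed

definition uncut :: "'v set set \<Rightarrow> ('v \<times> 'v) set" where
  "uncut E = {(a, b). a \<in> X \<and> b \<in> X \<and> list_edges (tpath a b) \<inter> E = {}}"

lemma uncut_trans:
  assumes "(a, b) \<in> uncut E" "(b, c) \<in> uncut E"
  shows "(a, c) \<in> uncut E"
  using assms tpath_triangle(2)[of a b c] X_verts unfolding uncut_def by blast

lemma equiv_uncut: "equiv X (uncut E)"
proof (rule equivI)
  show "refl_on X (uncut E)"
    using tpath_refl X_verts unfolding refl_on_def uncut_def by auto
  show "sym (uncut E)"
  proof (rule symI)
    fix a b assume "(a, b) \<in> uncut E"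
    moreover have "a \<in> X \<Longrightarrow> b \<in> X \<Longrightarrow> list_edges (tpath b a) = list_edges (tpath a b)"
      using list_edges_tpath_commute X_verts by blast
    ultimately show "(b, a) \<in> uncut E" unfolding uncut_def by simp
  qed
  show "trans (uncut E)" using uncut_trans by (blast intro: transI)
qed (auto simp: uncut_def)

lemma forest_of_eq_quotient: "forest_of X T E = X // uncut E"
proof -
  have "{b \<in> X. edges (span T {a, b}) \<inter> E = {}} = uncut E `` {a}" if "a \<in> X" for a
    using edges_span_pair that unfolding uncut_def by auto
  then show ?thesis unfolding forest_of_def quotient_def by auto
qed

lemma uncut_if_same_part:
  assumes "Y \<in> X // uncut E" "a \<in> Y" "b \<in> Y"
  shows "(a, b) \<in> uncut E"
  using quotient_eq_iff[OF equiv_uncut assms(1,1,2,3)] by simp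

lemma uncut_across_meeting_tpaths:
  assumes "(a, b) \<in> uncut E" "(c, d) \<in> uncut E" "\<not> quartet_split T a b c d"
  shows "(a, c) \<in> uncut E"
proof -
  obtain x where x: "x \<in> set (tpath a b)" "x \<in> set (tpath c d)"
    using assms(3) unfolding quartet_split_def by blast
  have v: "a \<in> verts T" "b \<in> verts T" "c \<in> verts T" "d \<in> verts T"
    using assms(1,2) X_verts unfolding uncut_def by auto
  have xv: "x \<in> verts T" using x v tpath_verts by blast
  have "list_edges (tpath a x) \<subseteq> list_edges (tpath a b)" using tpath_split_sets(6)[OF v(1,2) x(1)] .
  moreover have "list_edges (tpath x c) \<subseteq> list_edges (tpath c d)"
    using tpath_split_sets(6)[OF v(3,4) x(2)] list_edges_tpath_commute[OF v(3) xv] by simp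
  ultimately show ?thesis
    using tpath_triangle(2)[OF v(1) xv v(3)] assms(1,2) unfolding uncut_def by blast
qed

lemma quartet_split_across_parts:
  assumes "Y \<in> X // uncut E" "Z \<in> X // uncut E" "Y \<noteq> Z" "a \<in> Y" "b \<in> Y" "c \<in> Z" "d \<in> Z"
  shows "quartet_split T a b c d"
  using uncut_across_meeting_tpaths[of a b E c d] uncut_if_same_part[OF assms(1,4,5)]
    uncut_if_same_part[OF assms(2,6,7)] quotient_eq_iff[OF equiv_uncut assms(1,2,4,6)] assms(3)
  by blast

end

locale phylo_family =
  fixes X :: "'v set" and T :: "nat \<Rightarrow> 'v graph" and t :: nat
  assumes one_le_t: "1 \<le> t" and phylo_trees: "\<forall>i\<in>{1..t}. phylo_tree X (T i)"
begin

lemma phylo_T: "i \<in> {1..t} \<Longrightarrow> phylo (T i) X"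
  using phylo_trees by (simp add: phylo_def phylo_axioms_def tree_def phylo_tree_def)

sublocale T1: phylo "T 1" X using phylo_T one_le_t by simp

lemma incompatible_quartet_iff:
  assumes "{a, b, c, d} \<subseteq> X" "distinct [a, b, c, d]"
  shows "{a, b, c, d} \<in> all_incompatible X T t \<longleftrightarrow>
    (\<exists>i\<in>{2..t}. \<not> quartets_agree (T 1) (T i) {a, b, c, d})"
proof -
  have "iso_fixing {a, b, c, d} (restr (T 1) {a, b, c, d}) (restr (T i) {a, b, c, d}) \<longleftrightarrow>
      quartets_agree (T 1) (T i) {a, b, c, d}" if "i \<in> {2..t}" for i
    using iso_restr_iff_quartets_agree[OF T1.phylo_axioms phylo_T assms(1,1)] that by simp
  then show ?thesis
    using assms unfolding all_incompatible_def incompatible_quartets_def is_quartet_def by auto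
qed

lemma incompatible_split_data:
  assumes "Q \<in> all_incompatible X T t" "Q = {a, b, c, d}" "is_split (restr (T 1) Q) a b c d"
  obtains i where "i \<in> {1..t}" "{a, b, c, d} \<subseteq> X" "distinct [a, b, c, d]" "quartet_split (T 1) a b c d"
    "\<not> quartets_agree (T 1) (T i) {a, b, c, d}"
proof -
  obtain i where i: "i \<in> {2..t}" "is_quartet X Q" "\<not> iso_fixing Q (restr (T 1) Q) (restr (T i) Q)"
    using assms(1) unfolding all_incompatible_def incompatible_quartets_def by blast
  have X: "{a, b, c, d} \<subseteq> X" and dist: "distinct [a, b, c, d]"
    using i(2) assms(2) card_4_distinct[of a b c d] unfolding is_quartet_def by auto
  have i1: "i \<in> {1..t}" using i(1) by simp
  have "quartet_split (T 1) a b c d"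
    using assms(2,3) is_split_iff_quartet_split[OF T1.phylo_axioms X dist] by blast
  moreover have "\<not> quartets_agree (T 1) (T i) {a, b, c, d}"
    using i(3) assms(2) iso_restr_iff_quartets_agree[OF T1.phylo_axioms phylo_T[OF i1] X X] by simp
  ultimately show ?thesis using that i1 X dist by blast
qed

lemma L_edges_eq:
  assumes "{a, b, c, d} \<subseteq> X"
  shows "L_edges (T 1) a b c d = list_edges (T1.tpath a b) \<union> list_edges (T1.tpath c d)"
  using assms T1.edges_span_pair unfolding L_edges_def by simp

lemma constraint_satisfied_iff:
  assumes "{a, b, c, d} \<subseteq> X"
  shows "1 \<le> (\<Sum>e\<in>L_edges (T 1) a b c d. if e \<in> E then 1 else 0 :: int) \<longleftrightarrow>
    (a, b) \<notin> T1.uncut E \<or> (c, d) \<notin> T1.uncut E"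
proof -
  let ?L = "list_edges (T1.tpath a b) \<union> list_edges (T1.tpath c d)"
  have "?L \<subseteq> edges (T 1)" using T1.list_edges_tpath_subset T1.X_verts assms by auto
  then have "finite ?L" using T1.finite_edges finite_subset by blast
  then have "1 \<le> (\<Sum>e\<in>?L. if e \<in> E then 1 else 0 :: int) \<longleftrightarrow> ?L \<inter> E \<noteq> {}"
    by (rule sum_indicator_ge_1_iff)
  then show ?thesis unfolding L_edges_eq[OF assms] T1.uncut_def using assms by auto
qed

lemma ip_feasible_iff:
  "ip_feasible X T t (\<lambda>e. if e \<in> E then 1 else 0) \<longleftrightarrow>
    (\<forall>Q\<in>all_incompatible X T t. \<forall>a b c d. Q = {a, b, c, d} \<and> is_split (restr (T 1) Q) a b c d \<longrightarrow>
       (a, b) \<notin> T1.uncut E \<or> (c, d) \<notin> T1.uncut E)"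
  (is "_ \<longleftrightarrow> (\<forall>Q\<in>_. \<forall>a b c d. ?split Q a b c d \<longrightarrow> ?cut a b c d)")
proof -
  have eq: "1 \<le> (\<Sum>e\<in>L_edges (T 1) a b c d. if e \<in> E then 1 else 0 :: int) \<longleftrightarrow> ?cut a b c d"
    if "Q \<in> all_incompatible X T t" "?split Q a b c d" for Q a b c d
  proof (rule constraint_satisfied_iff)
    show "{a, b, c, d} \<subseteq> X"
      using that unfolding all_incompatible_def incompatible_quartets_def is_quartet_def by auto
  qed
  show ?thesis
  proof
    assume F: "ip_feasible X T t (\<lambda>e. if e \<in> E then 1 else 0)"
    show "\<forall>Q\<in>all_incompatible X T t. \<forall>a b c d. ?split Q a b c d \<longrightarrow> ?cut a b c d"
    proof (intro ballI allI impI)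
      fix Q a b c d assume Q: "Q \<in> all_incompatible X T t" "?split Q a b c d"
      then show "?cut a b c d" using F eq[OF Q] unfolding ip_feasible_def by blast
    qed
  next
    assume cut: "\<forall>Q\<in>all_incompatible X T t. \<forall>a b c d. ?split Q a b c d \<longrightarrow> ?cut a b c d"
    show "ip_feasible X T t (\<lambda>e. if e \<in> E then 1 else 0)"
      unfolding ip_feasible_def
    proof (intro conjI ballI allI impI)
      fix Q a b c d assume Q: "Q \<in> all_incompatible X T t" "?split Q a b c d"
      then show "1 \<le> (\<Sum>e\<in>L_edges (T 1) a b c d. if e \<in> E then 1 else 0 :: int)"
        using cut eq[OF Q] by blast
    qed simp
  qed
qed

context
  fixes E :: "'v set set"
  assumes feasible: "ip_feasible X T t (\<lambda>e. if e \<in> E then 1 else 0)"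
begin

lemma kept_split_displayed:
  assumes i: "i \<in> {1..t}" and X: "{a, b, c, d} \<subseteq> X" and dist: "distinct [a, b, c, d]"
    and q: "quartet_split (T 1) a b c d" and ab: "(a, b) \<in> T1.uncut E" and cd: "(c, d) \<in> T1.uncut E"
  shows "quartet_split (T i) a b c d"
proof (rule ccontr)
  assume nq: "\<not> quartet_split (T i) a b c d"
  then have "i \<in> {2..t}" using q i by (cases "i = 1") auto
  moreover have "\<not> quartets_agree (T 1) (T i) {a, b, c, d}"
    using q nq quartets_agreeD[of "T 1" "T i" "{a, b, c, d}" a b c d] by blast
  ultimately have "{a, b, c, d} \<in> all_incompatible X T t"
    using incompatible_quartet_iff[OF X dist] by blast
  moreover have "is_split (restr (T 1) {a, b, c, d}) a b c d"
    using is_split_iff_quartet_split[OF T1.phylo_axioms X dist] q by blast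
  ultimately show False using feasible ab cd unfolding ip_feasible_iff by blast
qed

lemma feasible_quartets_agree:
  assumes i: "i \<in> {1..t}" and Y: "Y \<in> X // T1.uncut E"
  shows "quartets_agree (T 1) (T i) Y"
proof -
  have YX: "Y \<subseteq> X" using Y in_quotient_imp_subset T1.equiv_uncut by blast
  show ?thesis
  proof (rule quartets_agree_if_distinct_agree[OF T1.phylo_axioms phylo_T[OF i] YX YX])
    fix a b c d assume abcd: "a \<in> Y" "b \<in> Y" "c \<in> Y" "d \<in> Y" and dist: "distinct [a, b, c, d]"
    have X: "{a, b, c, d} \<subseteq> X" using abcd YX by auto
    obtain x y z w where xyzw: "{x, y, z, w} = {a, b, c, d}" "distinct [x, y, z, w]"
      "quartet_split (T 1) x y z w"
      using T1.quartet_split_exists[OF X dist] .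
    have "{x, y, z, w} \<subseteq> Y" using xyzw(1) abcd by simp
    then have "(x, y) \<in> T1.uncut E" "(z, w) \<in> T1.uncut E" "{x, y, z, w} \<subseteq> X"
      using T1.uncut_if_same_part[OF Y] YX by auto
    then have "quartet_split (T i) x y z w" using kept_split_displayed[OF i _ xyzw(2,3)] by blast
    then have "quartets_agree (T 1) (T i) {a, b, c, d}"
      using quartet_splits_agree[OF T1.phylo_axioms phylo_T[OF i] _ _ xyzw(2,3)] xyzw(1) X by simp
    then show "quartet_split (T 1) a b c d \<longleftrightarrow> quartet_split (T i) a b c d"
      by (rule quartets_agreeD) simp_all
  qed
qed

lemma feasible_spans_disjoint:
  assumes i: "i \<in> {1..t}" and Y: "Y \<in> X // T1.uncut E" and Z: "Z \<in> X // T1.uncut E" and YZ: "Y \<noteq> Z"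
  shows "verts (span (T i) Y) \<inter> verts (span (T i) Z) = {}"
proof -
  interpret Ti: phylo "T i" X by (rule phylo_T[OF i])
  have sub: "Y \<subseteq> X" "Z \<subseteq> X" using Y Z in_quotient_imp_subset T1.equiv_uncut by blast+
  have disj: "Y \<inter> Z = {}" using quotient_disj[OF T1.equiv_uncut Y Z] YZ by blast
  have "quartet_split (T i) a b c d" if abcd: "a \<in> Y" "b \<in> Y" "c \<in> Z" "d \<in> Z" for a b c d
  proof -
    have X: "{a, b, c, d} \<subseteq> X" using abcd sub by auto
    have q: "quartet_split (T 1) a b c d" using T1.quartet_split_across_parts[OF Y Z YZ abcd] .
    show ?thesis
    proof (cases "distinct [a, b, c, d]")
      case True
      then show ?thesis
        using kept_split_displayed[OF i X True q] T1.uncut_if_same_part[OF Y] T1.uncut_if_same_part[OF Z] abcd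
        by blast
    next
      case False
      then show ?thesis
        using T1.quartet_split_degenerate[of a b c d] Ti.quartet_split_degenerate[of a b c d] q X by auto
    qed
  qed
  then show ?thesis using Ti.verts_span_disjoint_iff[OF sub] by blast
qed

end

lemma feasible_imp_agreement_forest:
  assumes "ip_feasible X T t (\<lambda>e. if e \<in> E then 1 else 0)"
  shows "agreement_forest X T t (forest_of X (T 1) E)"
proof -
  have "iso_fixing Y (restr (T i) Y) (restr (T j) Y)"
    if "i \<in> {1..t}" "j \<in> {1..t}" "Y \<in> X // T1.uncut E" for i j Y
  proof -
    have "Y \<subseteq> X" using that in_quotient_imp_subset T1.equiv_uncut by blast
    moreover have "quartets_agree (T i) (T j) Y"
      using quartets_agree_via feasible_quartets_agree[OF assms] that by blast
    ultimately show ?thesis using iso_restr_iff_quartets_agree[OF phylo_T phylo_T] that by blast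
  qed
  then show ?thesis
    unfolding agreement_forest_def T1.forest_of_eq_quotient
    using is_partition_quotient[OF T1.equiv_uncut] feasible_spans_disjoint[OF assms] by blast
qed

lemma agreement_forest_quartets_agree:
  assumes AF: "agreement_forest X T t (forest_of X (T 1) E)" and i: "i \<in> {1..t}"
    and Y: "Y \<in> X // T1.uncut E"
  shows "quartets_agree (T 1) (T i) Y"
proof -
  have "1 \<in> {1..t}" using one_le_t by simp
  then have "iso_fixing Y (restr (T 1) Y) (restr (T i) Y)"
    using AF i Y unfolding agreement_forest_def T1.forest_of_eq_quotient by blast
  moreover have "Y \<subseteq> X" using Y in_quotient_imp_subset[OF T1.equiv_uncut] by blast
  ultimately show ?thesis using iso_restr_iff_quartets_agree[OF T1.phylo_axioms phylo_T[OF i]] by blast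
qed

lemma agreement_forest_split_across_parts:
  assumes AF: "agreement_forest X T t (forest_of X (T 1) E)" and i: "i \<in> {1..t}"
    and Y: "Y \<in> X // T1.uncut E" and Z: "Z \<in> X // T1.uncut E" and YZ: "Y \<noteq> Z"
    and abcd: "a \<in> Y" "b \<in> Y" "c \<in> Z" "d \<in> Z"
  shows "quartet_split (T i) a b c d"
proof -
  have sub: "Y \<subseteq> X" "Z \<subseteq> X" using Y Z in_quotient_imp_subset[OF T1.equiv_uncut] by blast+
  have "verts (span (T i) Y) \<inter> verts (span (T i) Z) = {}"
    using AF i Y Z YZ unfolding agreement_forest_def T1.forest_of_eq_quotient by blast
  then show ?thesis using iffD1[OF phylo.verts_span_disjoint_iff[OF phylo_T[OF i] sub]] abcd by blast
qed

lemma agreement_forest_imp_feasible: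
  assumes AF: "agreement_forest X T t (forest_of X (T 1) E)"
  shows "ip_feasible X T t (\<lambda>e. if e \<in> E then 1 else 0)"
  unfolding ip_feasible_iff
proof (intro ballI allI impI)
  fix Q a b c d
  assume "Q \<in> all_incompatible X T t" and "Q = {a, b, c, d} \<and> is_split (restr (T 1) Q) a b c d"
  then obtain i where i: "i \<in> {1..t}" and X: "{a, b, c, d} \<subseteq> X" and dist: "distinct [a, b, c, d]"
    and q1: "quartet_split (T 1) a b c d" and not_agree: "\<not> quartets_agree (T 1) (T i) {a, b, c, d}"
    using incompatible_split_data by blast
  define A C where "A = T1.uncut E `` {a}" and "C = T1.uncut E `` {c}"
  have parts: "A \<in> X // T1.uncut E" "C \<in> X // T1.uncut E"
    using X unfolding A_def C_def quotient_def by auto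
  have a: "a \<in> A" and c: "c \<in> C"
    using X T1.equiv_uncut unfolding A_def C_def equiv_def refl_on_def by auto
  show "(a, b) \<notin> T1.uncut E \<or> (c, d) \<notin> T1.uncut E"
  proof (rule ccontr)
    assume "\<not> ?thesis"
    then have b: "b \<in> A" and d: "d \<in> C" unfolding A_def C_def by auto
    show False
    proof (cases "A = C")
      case True
      then have "{a, b, c, d} \<subseteq> A" using a b c d by auto
      then show False
        using not_agree quartets_agree_subset agreement_forest_quartets_agree[OF AF i parts(1)] by blast
    next
      case False
      have "quartet_split (T i) a b c d"
        using agreement_forest_split_across_parts[OF AF i parts False a b c d] .
      then show False
        using not_agree quartet_splits_agree[OF T1.phylo_axioms phylo_T[OF i] X X dist q1] by blast
    qed
  qed
qed

end

theorem theorem2: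
  fixes X :: "'v set" and T :: "nat \<Rightarrow> 'v graph" and t :: nat and E :: "'v set set"
  assumes "finite X" and "1 \<le> t"
    and "\<forall>i\<in>{1..t}. phylo_tree X (T i)"
    and "E \<subseteq> edges (T 1)"
  shows "ip_feasible X T t (\<lambda>e. if e \<in> E then 1 else 0)
         \<longleftrightarrow> agreement_forest X T t (forest_of X (T 1) E)"
proof -
  interpret phylo_family X T t using assms(2,3) by unfold_locales
  show ?thesis using feasible_imp_agreement_forest agreement_forest_imp_feasible by blast
qed

end
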